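(* Let $(\mathcal M,g_{ab})$ be a 4-dimensional Lorentzian manifold with a Killing vector $\vec\zeta$, and let $x$ be a point at which $\vec\zeta$ is timelike. Then $\mathcal S_{abc}\bar{\mathcal S}^{abc}|_x\ge0$, with equality if and only if $\mathcal S_{abc}|_x=0$.
   Context: $(\mathcal M,g_{ab})$ is a 4-dimensional Lorentzian manifold (signature $(-,+,+,+)$) with volume form $\eta_{abcd}$ and Weyl tensor $C_{abcd}$; square brackets denote antisymmetrization. For a Killing vector $\vec\zeta$: $\lambda=\zeta_a\zeta^a$, $F_{ab}=\nabla_a\zeta_b$, $F^*_{ab}=\tfrac12\eta_{abcd}F^{cd}$, $\mathcal F_{ab}=F_{ab}+iF^*_{ab}$; $C^*_{abcd}=\tfrac12\eta_{cdpq}C_{ab}{}^{pq}$, $\mathcal C_{abcd}=C_{abcd}+iC^*_{abcd}$; Ernst one-form $\sigma_a=2\mathcal F_{ab}\zeta^b$; $\gamma_{ab}=\zeta_a\zeta_b-\lambda g_{ab}$. The space-time Simon tensor is $\mathcal S_{abc}=\gamma_{a[b}\mathcal C_{c]mrd}\zeta^m\mathcal F^{rd}+4\zeta^m\zeta^r\mathcal C_{mar[c}\sigma_{b]}$. *)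

theory Defs
  imports "HOL-Analysis.Analysis"
begin

text \<open>Local (chart) description of a 4-dimensional Lorentzian manifold:
  an open coordinate domain U in R^4 with smooth metric components g x a b
  (indices of type 4).\<close>

type_synonym pt = "real^4"
type_synonym idx = 4

definition pd :: "idx \<Rightarrow> (pt \<Rightarrow> real) \<Rightarrow> pt \<Rightarrow> real" where
  "pd i f x = deriv (\<lambda>t. f (x + t *\<^sub>R axis i 1)) 0"

fun iter_pd :: "idx list \<Rightarrow> (pt \<Rightarrow> real) \<Rightarrow> pt \<Rightarrow> real" where
  "iter_pd [] f = f"
| "iter_pd (i # is) f = pd i (iter_pd is f)"

definition smooth_on :: "pt set \<Rightarrow> (pt \<Rightarrow> real) \<Rightarrow> bool" where
  "smooth_on U f \<longleftrightarrow>
     (\<forall>is. continuous_on U (iter_pd is f) \<and>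
        (\<forall>i. \<forall>x\<in>U. (\<lambda>t. iter_pd is f (x + t *\<^sub>R axis i 1)) differentiable (at 0)))"

definition lorentzian_form :: "(idx \<Rightarrow> idx \<Rightarrow> real) \<Rightarrow> bool" where
  "lorentzian_form h \<longleftrightarrow> (\<forall>a b. h a b = h b a) \<and>
     (\<exists>e :: idx \<Rightarrow> idx \<Rightarrow> real. \<forall>i j.
        (\<Sum>a\<in>UNIV. \<Sum>b\<in>UNIV. h a b * e i a * e j b) =
        (if i = j then (if i = 0 then -1 else 1) else 0))"

definition gmat :: "(pt \<Rightarrow> idx \<Rightarrow> idx \<Rightarrow> real) \<Rightarrow> pt \<Rightarrow> real^4^4" where
  "gmat g x = (\<chi> a b. g x a b)"

definition ginv :: "(pt \<Rightarrow> idx \<Rightarrow> idx \<Rightarrow> real) \<Rightarrow> pt \<Rightarrow> idx \<Rightarrow> idx \<Rightarrow> real" where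
  "ginv g x a b = matrix_inv (gmat g x) $ a $ b"

definition christoffel :: "(pt \<Rightarrow> idx \<Rightarrow> idx \<Rightarrow> real) \<Rightarrow> pt \<Rightarrow> idx \<Rightarrow> idx \<Rightarrow> idx \<Rightarrow> real" where
  "christoffel g x a b c = (1/2) * (\<Sum>d\<in>UNIV. ginv g x a d *
      (pd b (\<lambda>y. g y d c) x + pd c (\<lambda>y. g y d b) x - pd d (\<lambda>y. g y b c) x))"

definition riemann_up :: "(pt \<Rightarrow> idx \<Rightarrow> idx \<Rightarrow> real) \<Rightarrow> pt \<Rightarrow> idx \<Rightarrow> idx \<Rightarrow> idx \<Rightarrow> idx \<Rightarrow> real" where
  "riemann_up g x a b c d =
     pd c (\<lambda>y. christoffel g y a d b) x - pd d (\<lambda>y. christoffel g y a c b) x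
     + (\<Sum>e\<in>UNIV. christoffel g x a c e * christoffel g x e d b
                 - christoffel g x a d e * christoffel g x e c b)"

definition riemann :: "(pt \<Rightarrow> idx \<Rightarrow> idx \<Rightarrow> real) \<Rightarrow> pt \<Rightarrow> idx \<Rightarrow> idx \<Rightarrow> idx \<Rightarrow> idx \<Rightarrow> real" where
  "riemann g x a b c d = (\<Sum>e\<in>UNIV. g x a e * riemann_up g x e b c d)"

definition ricci :: "(pt \<Rightarrow> idx \<Rightarrow> idx \<Rightarrow> real) \<Rightarrow> pt \<Rightarrow> idx \<Rightarrow> idx \<Rightarrow> real" where
  "ricci g x b d = (\<Sum>a\<in>UNIV. riemann_up g x a b a d)"

definition scalar_curv :: "(pt \<Rightarrow> idx \<Rightarrow> idx \<Rightarrow> real) \<Rightarrow> pt \<Rightarrow> real" where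
  "scalar_curv g x = (\<Sum>b\<in>UNIV. \<Sum>d\<in>UNIV. ginv g x b d * ricci g x b d)"

definition weyl :: "(pt \<Rightarrow> idx \<Rightarrow> idx \<Rightarrow> real) \<Rightarrow> pt \<Rightarrow> idx \<Rightarrow> idx \<Rightarrow> idx \<Rightarrow> idx \<Rightarrow> real" where
  "weyl g x a b c d = riemann g x a b c d
     - (1/2) * (g x a c * ricci g x b d - g x a d * ricci g x b c
               - g x b c * ricci g x a d + g x b d * ricci g x a c)
     + (scalar_curv g x / 6) * (g x a c * g x b d - g x a d * g x b c)"

text \<open>Levi-Civita symbol (epsilon_{0123} = 1).\<close>
definition levi_civita :: "idx \<Rightarrow> idx \<Rightarrow> idx \<Rightarrow> idx \<Rightarrow> real" where
  "levi_civita a b c d = (let v = [a, b, c, d] in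
     real_of_int (\<Prod>p\<in>{(i, j). i < j \<and> j < (4::nat)}.
        sgn (Rep_bit0 (v ! snd p) - Rep_bit0 (v ! fst p))))"

text \<open>Volume form eta_{abcd} (chart orientation).\<close>
definition vol :: "(pt \<Rightarrow> idx \<Rightarrow> idx \<Rightarrow> real) \<Rightarrow> pt \<Rightarrow> idx \<Rightarrow> idx \<Rightarrow> idx \<Rightarrow> idx \<Rightarrow> real" where
  "vol g x a b c d = sqrt \<bar>det (gmat g x)\<bar> * levi_civita a b c d"

text \<open>Vector field zeta given by contravariant components zeta y a.\<close>
definition zeta_low :: "(pt \<Rightarrow> idx \<Rightarrow> idx \<Rightarrow> real) \<Rightarrow> (pt \<Rightarrow> idx \<Rightarrow> real) \<Rightarrow> pt \<Rightarrow> idx \<Rightarrow> real" where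
  "zeta_low g \<zeta> x a = (\<Sum>b\<in>UNIV. g x a b * \<zeta> x b)"

definition Fkill :: "(pt \<Rightarrow> idx \<Rightarrow> idx \<Rightarrow> real) \<Rightarrow> (pt \<Rightarrow> idx \<Rightarrow> real) \<Rightarrow> pt \<Rightarrow> idx \<Rightarrow> idx \<Rightarrow> real" where
  "Fkill g \<zeta> x a b = pd a (\<lambda>y. zeta_low g \<zeta> y b) x
      - (\<Sum>c\<in>UNIV. christoffel g x c a b * zeta_low g \<zeta> x c)"

definition killing_vector :: "pt set \<Rightarrow> (pt \<Rightarrow> idx \<Rightarrow> idx \<Rightarrow> real) \<Rightarrow> (pt \<Rightarrow> idx \<Rightarrow> real) \<Rightarrow> bool" where
  "killing_vector U g \<zeta> \<longleftrightarrow> (\<forall>a. smooth_on U (\<lambda>y. \<zeta> y a)) \<and>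
     (\<forall>x\<in>U. \<forall>a b. Fkill g \<zeta> x a b + Fkill g \<zeta> x b a = 0)"

definition lam :: "(pt \<Rightarrow> idx \<Rightarrow> idx \<Rightarrow> real) \<Rightarrow> (pt \<Rightarrow> idx \<Rightarrow> real) \<Rightarrow> pt \<Rightarrow> real" where
  "lam g \<zeta> x = (\<Sum>a\<in>UNIV. zeta_low g \<zeta> x a * \<zeta> x a)"

definition F_up where
  "F_up g \<zeta> x a b = (\<Sum>c\<in>UNIV. \<Sum>d\<in>UNIV. ginv g x a c * ginv g x b d * Fkill g \<zeta> x c d)"

definition F_dual where
  "F_dual g \<zeta> x a b = (1/2) * (\<Sum>c\<in>UNIV. \<Sum>d\<in>UNIV. vol g x a b c d * F_up g \<zeta> x c d)"

definition calF :: "(pt \<Rightarrow> idx \<Rightarrow> idx \<Rightarrow> real) \<Rightarrow> (pt \<Rightarrow> idx \<Rightarrow> real) \<Rightarrow> pt \<Rightarrow> idx \<Rightarrow> idx \<Rightarrow> complex" where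
  "calF g \<zeta> x a b = complex_of_real (Fkill g \<zeta> x a b) + \<i> * complex_of_real (F_dual g \<zeta> x a b)"

definition calF_up where
  "calF_up g \<zeta> x a b = (\<Sum>c\<in>UNIV. \<Sum>d\<in>UNIV.
      complex_of_real (ginv g x a c * ginv g x b d) * calF g \<zeta> x c d)"

definition weyl_dual where
  "weyl_dual g x a b c d = (1/2) * (\<Sum>p\<in>UNIV. \<Sum>q\<in>UNIV. vol g x c d p q *
      (\<Sum>e\<in>UNIV. \<Sum>f\<in>UNIV. ginv g x p e * ginv g x q f * weyl g x a b e f))"

definition calC :: "(pt \<Rightarrow> idx \<Rightarrow> idx \<Rightarrow> real) \<Rightarrow> pt \<Rightarrow> idx \<Rightarrow> idx \<Rightarrow> idx \<Rightarrow> idx \<Rightarrow> complex" where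
  "calC g x a b c d = complex_of_real (weyl g x a b c d) + \<i> * complex_of_real (weyl_dual g x a b c d)"

definition ernst where
  "ernst g \<zeta> x a = 2 * (\<Sum>b\<in>UNIV. calF g \<zeta> x a b * complex_of_real (\<zeta> x b))"

definition gamma where
  "gamma g \<zeta> x a b = zeta_low g \<zeta> x a * zeta_low g \<zeta> x b - lam g \<zeta> x * g x a b"

definition simonX where
  "simonX g \<zeta> x c = (\<Sum>m\<in>UNIV. \<Sum>r\<in>UNIV. \<Sum>d\<in>UNIV.
      calC g x c m r d * complex_of_real (\<zeta> x m) * calF_up g \<zeta> x r d)"

text \<open>S_{abc} = gamma_{a[b} X_{c]} + 4 zeta^m zeta^r calC_{mar[c} sigma_{b]},
  with T_{[bc]} = (T_{bc} - T_{cb})/2.\<close>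
definition simon :: "(pt \<Rightarrow> idx \<Rightarrow> idx \<Rightarrow> real) \<Rightarrow> (pt \<Rightarrow> idx \<Rightarrow> real) \<Rightarrow> pt \<Rightarrow> idx \<Rightarrow> idx \<Rightarrow> idx \<Rightarrow> complex" where
  "simon g \<zeta> x a b c =
     (1/2) * (complex_of_real (gamma g \<zeta> x a b) * simonX g \<zeta> x c
             - complex_of_real (gamma g \<zeta> x a c) * simonX g \<zeta> x b)
   + 4 * (\<Sum>m\<in>UNIV. \<Sum>r\<in>UNIV. complex_of_real (\<zeta> x m * \<zeta> x r) *
        ((1/2) * (calC g x m a r c * ernst g \<zeta> x b - calC g x m a r b * ernst g \<zeta> x c)))"

definition simon_sq where
  "simon_sq g \<zeta> x = (\<Sum>a\<in>UNIV. \<Sum>b\<in>UNIV. \<Sum>c\<in>UNIV. \<Sum>d\<in>UNIV. \<Sum>e\<in>UNIV. \<Sum>f\<in>UNIV.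
      complex_of_real (ginv g x a d * ginv g x b e * ginv g x c f) *
      simon g \<zeta> x a b c * cnj (simon g \<zeta> x d e f))"

end

theory Submission
  imports Defs
begin

(* At a point x with \<lambda> = \<zeta>\<cdot>\<zeta> < 0 the inverse metric splits as
   g^{ab} = h^{ab} + \<zeta>^a \<zeta>^b / \<lambda> with h^{ab} = \<Sum>_m \<mu>_m w_m^a w_m^b and all \<mu>_m > 0.
   The Simon tensor S_{abc} is orthogonal to \<zeta> in each of its three indices, so in
   S_{abc} conj(S)^{abc} every g^{..} may be replaced by h^{..}; the norm becomes
   \<Sum> \<mu>_k \<mu>_l \<mu>_m |S(w_k,w_l,w_m)|^2 \<ge> 0, and it vanishes only if all these frame
   components vanish, which forces S = 0 because g = h^{-1} on \<zeta>-orthogonal covectors. *)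


section \<open>Orthonormal frames of a Lorentzian form\<close>

definition minkowski :: "4 \<Rightarrow> real" where
  "minkowski i = (if i = 0 then -1 else 1)"

definition lorentz_frame :: "(4 \<Rightarrow> 4 \<Rightarrow> real) \<Rightarrow> (4 \<Rightarrow> 4 \<Rightarrow> real) \<Rightarrow> bool" where
  "lorentz_frame G e \<longleftrightarrow>
     (\<forall>i j. (\<Sum>a\<in>UNIV. \<Sum>b\<in>UNIV. G a b * e i a * e j b) = (if i = j then minkowski i else 0))"

definition frame_inverse :: "(4 \<Rightarrow> 4 \<Rightarrow> real) \<Rightarrow> 4 \<Rightarrow> 4 \<Rightarrow> real" where
  "frame_inverse e a c = (\<Sum>i\<in>UNIV. minkowski i * e i a * e i c)"

lemma lorentzian_form_frame: "lorentzian_form h \<Longrightarrow> \<exists>e. lorentz_frame h e"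
  unfolding lorentzian_form_def lorentz_frame_def minkowski_def by auto

lemma lorentzian_form_sym: "lorentzian_form h \<Longrightarrow> h a b = h b a"
  unfolding lorentzian_form_def by auto

lemma mult_if_zero_left: "(if P then a else 0) * b = (if P then a * b else (0::'a::mult_zero))"
  by simp

lemma mult_if_zero_right: "b * (if P then a else 0) = (if P then b * a else (0::'a::mult_zero))"
  by simp

text \<open>sum_4 expands a sum over the index type 4 as f 1 + f 2 + f 3 + f 4; since that type
  counts modulo 4, the last term is the 0-th component.\<close>
lemma four_eq_zero: "(4::4) = 0"
  by simp

text \<open>In matrix form, with E the frame matrix and D = diag(minkowski): E G E^T = D and
  D^2 = 1, so E^T D E is a two-sided inverse of G.\<close>
lemma frame_inverse_matrix:
  assumes fr: "lorentz_frame G e"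
  shows "(\<chi> a b. G a b) ** (\<chi> a c. frame_inverse e a c) = (mat 1 :: real^4^4)"
    and "(\<chi> a c. frame_inverse e a c) ** (\<chi> a b. G a b) = (mat 1 :: real^4^4)"
proof -
  define gm where "gm = ((\<chi> a b. G a b) :: real^4^4)"
  define N where "N = ((\<chi> a c. frame_inverse e a c) :: real^4^4)"
  define E where "E = ((\<chi> i a. e i a) :: real^4^4)"
  define D where "D = ((\<chi> i j. if i = j then minkowski i else 0) :: real^4^4)"
  have EG: "E ** gm ** transpose E = D"
  proof -
    have "(E ** gm ** transpose E) $ i $ j = D $ i $ j" for i j
    proof -
      have "(E ** gm ** transpose E) $ i $ j = (\<Sum>k\<in>UNIV. (\<Sum>a\<in>UNIV. e i a * G a k) * e j k)"
        by (simp add: E_def gm_def matrix_matrix_mult_def transpose_def)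
      also have "\<dots> = (\<Sum>a\<in>UNIV. \<Sum>b\<in>UNIV. G a b * e i a * e j b)"
        by (simp add: sum_distrib_right, subst sum.swap, simp add: ac_simps)
      finally show ?thesis using fr by (simp add: D_def lorentz_frame_def)
    qed
    then show ?thesis by (simp add: vec_eq_iff)
  qed
  have DD: "D ** D = mat 1"
    by (auto simp add: vec_eq_iff D_def matrix_matrix_mult_def mat_def minkowski_def
        mult_if_zero_left sum.delta sum.delta')
  have NE: "N = transpose E ** D ** E"
    by (simp add: vec_eq_iff N_def E_def D_def frame_inverse_def matrix_matrix_mult_def transpose_def
        mult_if_zero_left mult_if_zero_right sum.delta sum.delta' ac_simps)
  have "E ** (gm ** transpose E ** D) = mat 1"
    using EG DD by (metis matrix_mul_assoc)
  then have "(gm ** transpose E ** D) ** E = mat 1"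
    using matrix_left_right_inverse by blast
  then have right: "gm ** N = mat 1" unfolding NE by (simp add: matrix_mul_assoc)
  then show "(\<chi> a b. G a b) ** (\<chi> a c. frame_inverse e a c) = (mat 1 :: real^4^4)"
    by (simp add: gm_def N_def)
  from right have "N ** gm = mat 1" using matrix_left_right_inverse by blast
  then show "(\<chi> a c. frame_inverse e a c) ** (\<chi> a b. G a b) = (mat 1 :: real^4^4)"
    by (simp add: gm_def N_def)
qed

lemma frame_inverse_entries:
  assumes "lorentz_frame G e"
  shows "(\<Sum>b\<in>UNIV. G a b * frame_inverse e b c) = (if a = c then 1 else 0)"
    and "(\<Sum>b\<in>UNIV. frame_inverse e a b * G b c) = (if a = c then 1 else 0)"
  using frame_inverse_matrix[OF assms]
  by (simp_all add: vec_eq_iff matrix_matrix_mult_def mat_def)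

lemma ginv_eq_frame_inverse:
  assumes fr: "lorentz_frame (g x) e"
  shows "ginv g x a c = frame_inverse e a c"
proof -
  define N where "N = ((\<chi> a c. frame_inverse e a c) :: real^4^4)"
  have fi: "gmat g x ** N = mat 1" "N ** gmat g x = mat 1"
    using frame_inverse_matrix[OF fr] by (simp_all add: gmat_def N_def)
  then have "\<exists>A'. gmat g x ** A' = mat 1 \<and> A' ** gmat g x = mat 1" by blast
  then have "gmat g x ** matrix_inv (gmat g x) = mat 1 \<and> matrix_inv (gmat g x) ** gmat g x = mat 1"
    unfolding matrix_inv_def by (rule someI_ex)
  then have "matrix_inv (gmat g x) = N"
    using fi by (metis matrix_mul_assoc matrix_mul_lid matrix_mul_rid)
  then show ?thesis by (simp add: ginv_def N_def)
qed

lemma ginv_right_inverse: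
  assumes "lorentzian_form (g y)"
  shows "(\<Sum>b\<in>UNIV. g y a b * ginv g y b c) = (if a = c then 1 else 0)"
proof -
  obtain e where "lorentz_frame (g y) e" using lorentzian_form_frame[OF assms] by blast
  then show ?thesis by (simp add: ginv_eq_frame_inverse frame_inverse_entries(1))
qed

lemma ginv_sym:
  assumes "lorentzian_form (g y)"
  shows "ginv g y a b = ginv g y b a"
proof -
  obtain e where "lorentz_frame (g y) e" using lorentzian_form_frame[OF assms] by blast
  then show ?thesis by (simp add: ginv_eq_frame_inverse frame_inverse_def ac_simps)
qed

lemma det_gmat_nonzero:
  assumes "lorentzian_form (g y)"
  shows "det (gmat g y) \<noteq> 0"
proof -
  have "gmat g y ** (\<chi> a b. ginv g y a b) = mat 1"
    using ginv_right_inverse[where g=g and y=y, OF assms]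
    by (simp add: vec_eq_iff gmat_def matrix_matrix_mult_def mat_def)
  then have "det (gmat g y) * det (\<chi> a b. ginv g y a b) = 1" by (metis det_I det_mul)
  then show ?thesis by auto
qed

text \<open>Cramer's rule: the inverse metric is a rational function of the metric components;
  this is what makes it differentiable.\<close>
lemma ginv_cramer:
  assumes L: "lorentzian_form (g y)"
  shows "ginv g y a b = det (\<chi> i j. if j = a then axis b 1 $ i else gmat g y $ i $ j) / det (gmat g y)"
proof -
  have "gmat g y *v (\<chi> k. ginv g y k b) = axis b 1"
    using ginv_right_inverse[where g=g and y=y, OF L] by (simp add: vec_eq_iff gmat_def matrix_vector_mult_def axis_def)
  then have "(\<chi> k. ginv g y k b)
      = (\<chi> k. det (\<chi> i j. if j = k then axis b 1 $ i else gmat g y $ i $ j) / det (gmat g y))"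
    using cramer[OF det_gmat_nonzero[where g=g and y=y, OF L]] by blast
  then show ?thesis by (simp add: vec_eq_iff)
qed


section \<open>The inverse metric split along a timelike vector\<close>

lemma frame_coordinates:
  assumes fr: "lorentz_frame G e"
    and l: "l = (\<Sum>a\<in>UNIV. (\<Sum>b\<in>UNIV. G a b * z b) * z a)"
  shows "\<exists>c. (\<forall>a. z a = (\<Sum>i\<in>UNIV. c i * e i a)) \<and> l = c 1 ^ 2 + c 2 ^ 2 + c 3 ^ 2 - c 0 ^ 2"
proof -
  define p where "p i = (\<Sum>a\<in>UNIV. \<Sum>b\<in>UNIV. G a b * e i a * z b)" for i
  define c where "c i = minkowski i * p i" for i
  have zexp: "z a = (\<Sum>i\<in>UNIV. c i * e i a)" for a
  proof -
    have "z a = (\<Sum>k\<in>UNIV. (\<Sum>b\<in>UNIV. frame_inverse e a b * G b k) * z k)"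
      by (simp add: frame_inverse_entries(2)[OF fr] mult_if_zero_left sum.delta)
    also have "\<dots> = (\<Sum>k\<in>UNIV. \<Sum>b\<in>UNIV. \<Sum>i\<in>UNIV. minkowski i * e i a * e i b * G b k * z k)"
      by (simp add: frame_inverse_def sum_distrib_right)
    also have "\<dots> = (\<Sum>i\<in>UNIV. \<Sum>b\<in>UNIV. \<Sum>k\<in>UNIV. minkowski i * e i a * e i b * G b k * z k)"
      by (subst sum.swap, subst (2) sum.swap, subst sum.swap, rule refl)
    also have "\<dots> = (\<Sum>i\<in>UNIV. c i * e i a)"
      by (simp add: c_def p_def sum_distrib_left sum_distrib_right ac_simps)
    finally show ?thesis .
  qed
  have "l = (\<Sum>i\<in>UNIV. \<Sum>a\<in>UNIV. \<Sum>b\<in>UNIV. G a b * z b * c i * e i a)"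
    unfolding l
    by (subst (2) zexp, simp add: sum_distrib_left sum_distrib_right ac_simps,
        subst sum.swap, subst (2) sum.swap, rule refl)
  also have "\<dots> = (\<Sum>i\<in>UNIV. c i * p i)"
    by (rule sum.cong[OF refl]) (simp add: p_def sum_distrib_left ac_simps)
  also have "\<dots> = c 1 ^ 2 + c 2 ^ 2 + c 3 ^ 2 - c 0 ^ 2"
    by (simp add: c_def minkowski_def sum_4 four_eq_zero power2_eq_square)
  finally show ?thesis using zexp by blast
qed

text \<open>The scalar identity behind the splitting: with s = c_1^2+c_2^2+c_3^2 and
  l = s - c_0^2 < 0, a rank-one correction turns a Lorentzian quadratic form into a sum of
  two positive pieces.\<close>
lemma timelike_split_identity:
  fixes c0 s A0 D0 S cA cD l :: real
  assumes l: "l = s - c0^2" and ln: "l < 0" and c0: "c0 \<noteq> 0"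
  shows "S - A0*D0 - (c0*A0 + cA)*(c0*D0 + cD)/l
   = (s*A0*D0 + c0*A0*cD + c0*D0*cA + c0^2*S)/c0^2 + (s*A0 + c0*cA)*(s*D0 + c0*cD)/(c0^2 * (-l))"
proof -
  have l0: "l \<noteq> 0" using ln by simp
  have "S - A0*D0 - (c0*A0 + cA)*(c0*D0 + cD)/l
      = ((S - A0*D0)*(c0^2*(-l)) + (c0*A0 + cA)*(c0*D0 + cD)*c0^2)/(c0^2*(-l))"
    using c0 l0 by (simp add: field_simps)
  also have "\<dots> = ((s*A0*D0 + c0*A0*cD + c0*D0*cA + c0^2*S)*(-l) + (s*A0 + c0*cA)*(s*D0 + c0*cD))/(c0^2*(-l))"
    by (rule arg_cong[where f="\<lambda>x. x / _"]) (simp add: l algebra_simps power2_eq_square)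
  also have "\<dots> = (s*A0*D0 + c0*A0*cD + c0*D0*cA + c0^2*S)/c0^2 + (s*A0 + c0*cA)*(s*D0 + c0*cD)/(c0^2 * (-l))"
    using c0 l0 by (simp add: field_simps)
  finally show ?thesis .
qed

lemma timelike_inverse_split:
  assumes zc: "\<And>a. z a = (\<Sum>i\<in>UNIV. c i * e i a)"
    and ls: "l = c 1 ^ 2 + c 2 ^ 2 + c 3 ^ 2 - c 0 ^ 2" and lneg: "l < 0"
  shows "\<exists>(\<mu> :: 4 \<Rightarrow> real) (w :: 4 \<Rightarrow> 4 \<Rightarrow> real). (\<forall>m. \<mu> m > 0) \<and>
           (\<forall>a d. frame_inverse e a d = (\<Sum>m\<in>UNIV. \<mu> m * w m a * w m d) + (1/l) * z a * z d)"
proof -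
  define s where "s = c 1 ^ 2 + c 2 ^ 2 + c 3 ^ 2"
  have l: "l = s - c 0 ^ 2" using ls s_def by simp
  have c0: "c 0 \<noteq> 0"
  proof
    assume "c 0 = 0"
    then have "l \<ge> 0" using l s_def by simp
    with lneg show False by simp
  qed
  define wk where "wk m a = c m * e 0 a + c 0 * e m a" for m a
  define w where "w m a = (if m = 0 then c 1 * wk 1 a + c 2 * wk 2 a + c 3 * wk 3 a else wk m a)" for m a
  define \<mu> where "\<mu> (m::4) = (if m = 0 then 1 / (c 0 ^ 2 * (-l)) else 1 / c 0 ^ 2)" for m
  have "c 0 ^ 2 * l < 0" using c0 lneg by (simp add: mult_pos_neg)
  then have mupos: "\<mu> m > 0" for m using c0 by (simp add: \<mu>_def)
  have split: "frame_inverse e a d = (\<Sum>m\<in>UNIV. \<mu> m * w m a * w m d) + (1/l) * z a * z d" for a d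
  proof -
    define S where "S = e 1 a * e 1 d + e 2 a * e 2 d + e 3 a * e 3 d"
    define cA where "cA = c 1 * e 1 a + c 2 * e 2 a + c 3 * e 3 a"
    define cD where "cD = c 1 * e 1 d + c 2 * e 2 d + c 3 * e 3 d"
    have H: "frame_inverse e a d = S - e 0 a * e 0 d"
      by (simp add: frame_inverse_def sum_4 minkowski_def S_def four_eq_zero)
    have za: "z a = c 0 * e 0 a + cA" and zd: "z d = c 0 * e 0 d + cD"
      using zc[of a] zc[of d] by (simp_all add: sum_4 cA_def cD_def ac_simps four_eq_zero)
    have X: "wk 1 a * wk 1 d + wk 2 a * wk 2 d + wk 3 a * wk 3 d
        = s*e 0 a*e 0 d + c 0*e 0 a*cD + c 0*e 0 d*cA + c 0^2*S"
      by (simp add: wk_def s_def S_def cA_def cD_def algebra_simps power2_eq_square)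
    have YA: "c 1 * wk 1 a + c 2 * wk 2 a + c 3 * wk 3 a = s*e 0 a + c 0*cA"
      by (simp add: wk_def s_def cA_def algebra_simps power2_eq_square)
    have YD: "c 1 * wk 1 d + c 2 * wk 2 d + c 3 * wk 3 d = s*e 0 d + c 0*cD"
      by (simp add: wk_def s_def cD_def algebra_simps power2_eq_square)
    have sumw: "(\<Sum>m\<in>UNIV. \<mu> m * w m a * w m d)
       = (wk 1 a * wk 1 d + wk 2 a * wk 2 d + wk 3 a * wk 3 d) / c 0^2
         + (c 1 * wk 1 a + c 2 * wk 2 a + c 3 * wk 3 a) * (c 1 * wk 1 d + c 2 * wk 2 d + c 3 * wk 3 d)
           / (c 0^2 * (-l))"
      using c0 lneg by (simp add: sum_4 \<mu>_def w_def four_eq_zero field_simps)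
    have "S - e 0 a * e 0 d = (S - e 0 a * e 0 d - (c 0 * e 0 a + cA) * (c 0 * e 0 d + cD) / l)
        + (c 0 * e 0 a + cA) * (c 0 * e 0 d + cD) / l"
      by simp
    also have "\<dots> = (s*e 0 a*e 0 d + c 0*e 0 a*cD + c 0*e 0 d*cA + c 0^2*S)/c 0^2
         + (s*e 0 a + c 0*cA)*(s*e 0 d + c 0*cD)/(c 0^2 * (-l))
         + (c 0 * e 0 a + cA) * (c 0 * e 0 d + cD) / l"
      unfolding timelike_split_identity[OF l lneg c0] ..
    finally show ?thesis unfolding H sumw X YA YD za zd by simp
  qed
  show ?thesis using mupos split by blast
qed

lemma ginv_timelike_split:
  assumes L: "lorentzian_form (g x)" and lneg: "lam g \<zeta> x < 0"
  shows "\<exists>(\<mu> :: 4 \<Rightarrow> real) (w :: 4 \<Rightarrow> 4 \<Rightarrow> real). (\<forall>m. \<mu> m > 0) \<and>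
           (\<forall>a d. ginv g x a d = (\<Sum>m\<in>UNIV. \<mu> m * w m a * w m d) + (1 / lam g \<zeta> x) * \<zeta> x a * \<zeta> x d)"
proof -
  obtain e where fr: "lorentz_frame (g x) e" using lorentzian_form_frame[OF L] by blast
  have "lam g \<zeta> x = (\<Sum>a\<in>UNIV. (\<Sum>b\<in>UNIV. g x a b * \<zeta> x b) * \<zeta> x a)"
    unfolding lam_def zeta_low_def ..
  then obtain c where zc: "\<And>a. \<zeta> x a = (\<Sum>i\<in>UNIV. c i * e i a)"
      and lc: "lam g \<zeta> x = c 1 ^ 2 + c 2 ^ 2 + c 3 ^ 2 - c 0 ^ 2"
    using frame_coordinates[OF fr] by blast
  show ?thesis
    using timelike_inverse_split[OF zc lc lneg] ginv_eq_frame_inverse[where g=g and x=x, OF fr] by simp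
qed


section \<open>The norm of a rank-3 tensor orthogonal to a timelike vector\<close>

lemma sum_rotate3:
  "(\<Sum>x\<in>A. \<Sum>y\<in>B. \<Sum>w\<in>C. f x y w) = (\<Sum>w\<in>C. \<Sum>x\<in>A. \<Sum>y\<in>B. (f x y w :: 'c::comm_monoid_add))"
  by (subst sum.swap, subst (2) sum.swap, rule refl)

lemma sum_rotate3':
  "(\<Sum>x\<in>A. \<Sum>y\<in>B. \<Sum>w\<in>C. f x y w) = (\<Sum>y\<in>B. \<Sum>w\<in>C. \<Sum>x\<in>A. (f x y w :: 'c::comm_monoid_add))"
  by (rule trans[OF sum_rotate3 sum_rotate3])

lemma sum_swap_pairs:
  "(\<Sum>a\<in>A. \<Sum>d\<in>B. \<Sum>m\<in>C. \<Sum>l\<in>D. F a d m l)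
     = (\<Sum>m\<in>C. \<Sum>l\<in>D. \<Sum>a\<in>A. \<Sum>d\<in>B. (F a d m l :: 'c::comm_monoid_add))"
proof -
  have "(\<Sum>a\<in>A. \<Sum>d\<in>B. \<Sum>m\<in>C. \<Sum>l\<in>D. F a d m l) = (\<Sum>a\<in>A. \<Sum>m\<in>C. \<Sum>l\<in>D. \<Sum>d\<in>B. F a d m l)"
    by (rule sum.cong[OF refl], rule sum_rotate3')
  also have "\<dots> = (\<Sum>m\<in>C. \<Sum>l\<in>D. \<Sum>a\<in>A. \<Sum>d\<in>B. F a d m l)"
    by (rule sum_rotate3')
  finally show ?thesis .
qed

lemma mult_sum_sum:
  fixes c :: "'a::comm_semiring_1"
  shows "c * sum f A * sum g B = (\<Sum>a\<in>A. \<Sum>d\<in>B. c * f a * g d)"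
proof -
  have "c * sum f A * sum g B = c * (\<Sum>a\<in>A. \<Sum>d\<in>B. f a * g d)"
    by (simp add: sum_product mult.assoc)
  then show ?thesis by (simp add: sum_distrib_left mult.assoc)
qed

lemma contract_split_orth:
  fixes K :: "4 \<Rightarrow> 4 \<Rightarrow> real" and w :: "4 \<Rightarrow> 4 \<Rightarrow> real" and \<mu> :: "4 \<Rightarrow> real"
    and X Y :: "4 \<Rightarrow> complex"
  assumes K: "\<forall>a d. K a d = (\<Sum>m\<in>UNIV. \<mu> m * w m a * w m d) + s * z a * z d"
    and X: "(\<Sum>a\<in>UNIV. complex_of_real (z a) * X a) = 0"
  shows "(\<Sum>a\<in>UNIV. \<Sum>d\<in>UNIV. complex_of_real (K a d) * X a * cnj (Y d))
       = (\<Sum>m\<in>UNIV. complex_of_real (\<mu> m) * (\<Sum>a\<in>UNIV. complex_of_real (w m a) * X a)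
             * cnj (\<Sum>d\<in>UNIV. complex_of_real (w m d) * Y d))"
proof -
  let ?P = "\<lambda>m a d. complex_of_real (\<mu> m) * (complex_of_real (w m a) * X a) * (complex_of_real (w m d) * cnj (Y d))"
  have "(\<Sum>a\<in>UNIV. \<Sum>d\<in>UNIV. complex_of_real (K a d) * X a * cnj (Y d))
     = (\<Sum>a\<in>UNIV. \<Sum>d\<in>UNIV. \<Sum>m\<in>UNIV. ?P m a d)
       + complex_of_real s * (\<Sum>a\<in>UNIV. complex_of_real (z a) * X a) * (\<Sum>d\<in>UNIV. complex_of_real (z d) * cnj (Y d))"
    by (simp add: K sum_distrib_left sum_distrib_right sum.distrib algebra_simps)
  also have "\<dots> = (\<Sum>a\<in>UNIV. \<Sum>d\<in>UNIV. \<Sum>m\<in>UNIV. ?P m a d)"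
    using X by simp
  also have "\<dots> = (\<Sum>m\<in>UNIV. \<Sum>a\<in>UNIV. \<Sum>d\<in>UNIV. ?P m a d)"
    by (rule sum_rotate3)
  also have "\<dots> = (\<Sum>m\<in>UNIV. complex_of_real (\<mu> m) * (\<Sum>a\<in>UNIV. complex_of_real (w m a) * X a)
             * cnj (\<Sum>d\<in>UNIV. complex_of_real (w m d) * Y d))"
    by (rule sum.cong[OF refl]) (simp only: cnj_sum complex_cnj_mult complex_cnj_complex_of_real mult_sum_sum)
  finally show ?thesis .
qed

text \<open>Nondegeneracy: a vector orthogonal to z and to every w_m is annihilated by K, hence
  zero, because K has the left inverse G.\<close>
lemma orth_split_vanishes:
  fixes K G :: "4 \<Rightarrow> 4 \<Rightarrow> real" and w :: "4 \<Rightarrow> 4 \<Rightarrow> real" and \<mu> :: "4 \<Rightarrow> real"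
    and X :: "4 \<Rightarrow> complex"
  assumes K: "\<forall>a d. K a d = (\<Sum>m\<in>UNIV. \<mu> m * w m a * w m d) + s * z a * z d"
    and GK: "\<forall>a c. (\<Sum>b\<in>UNIV. G a b * K b c) = (if a = c then 1 else 0)"
    and X: "(\<Sum>a\<in>UNIV. complex_of_real (z a) * X a) = 0"
    and W: "\<forall>m. (\<Sum>c\<in>UNIV. complex_of_real (w m c) * X c) = 0"
  shows "X a = 0"
proof -
  have KX: "(\<Sum>c\<in>UNIV. complex_of_real (K b c) * X c) = 0" for b
  proof -
    have "(\<Sum>c\<in>UNIV. complex_of_real (K b c) * X c)
       = (\<Sum>m\<in>UNIV. complex_of_real (\<mu> m * w m b) * (\<Sum>c\<in>UNIV. complex_of_real (w m c) * X c))
         + complex_of_real (s * z b) * (\<Sum>c\<in>UNIV. complex_of_real (z c) * X c)"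
      by (simp add: K sum_distrib_left sum_distrib_right sum.distrib algebra_simps, subst sum.swap, simp)
    then show ?thesis using X W by simp
  qed
  have GKc: "(\<Sum>b\<in>UNIV. complex_of_real (G a b) * complex_of_real (K b c)) = (if a = c then 1 else 0)" for c
    using GK by (simp flip: of_real_sum of_real_mult)
  have "X a = (\<Sum>c\<in>UNIV. (\<Sum>b\<in>UNIV. complex_of_real (G a b) * complex_of_real (K b c)) * X c)"
    by (simp add: GKc mult_if_zero_left sum.delta)
  also have "\<dots> = (\<Sum>b\<in>UNIV. complex_of_real (G a b) * (\<Sum>c\<in>UNIV. complex_of_real (K b c) * X c))"
    by (simp add: sum_distrib_left sum_distrib_right mult.assoc, rule sum.swap)
  also have "\<dots> = 0" using KX by simp
  finally show ?thesis .
qed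

lemma orth_middle_after_contraction:
  fixes z w :: "4 \<Rightarrow> real" and T :: "4 \<Rightarrow> 4 \<Rightarrow> 4 \<Rightarrow> complex"
  assumes "\<forall>a c. (\<Sum>b\<in>UNIV. complex_of_real (z b) * T a b c) = 0"
  shows "(\<Sum>b\<in>UNIV. complex_of_real (z b) * (\<Sum>c\<in>UNIV. complex_of_real (w c) * T a b c)) = 0"
proof -
  have "(\<Sum>b\<in>UNIV. complex_of_real (z b) * (\<Sum>c\<in>UNIV. complex_of_real (w c) * T a b c))
     = (\<Sum>c\<in>UNIV. complex_of_real (w c) * (\<Sum>b\<in>UNIV. complex_of_real (z b) * T a b c))"
    by (simp add: sum_distrib_left mult.left_commute, rule sum.swap)
  then show ?thesis using assms by simp
qed

lemma orth_first_after_contraction: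
  fixes z v w :: "4 \<Rightarrow> real" and T :: "4 \<Rightarrow> 4 \<Rightarrow> 4 \<Rightarrow> complex"
  assumes "\<forall>b c. (\<Sum>a\<in>UNIV. complex_of_real (z a) * T a b c) = 0"
  shows "(\<Sum>a\<in>UNIV. complex_of_real (z a) *
            (\<Sum>b\<in>UNIV. complex_of_real (v b) * (\<Sum>c\<in>UNIV. complex_of_real (w c) * T a b c))) = 0"
proof -
  have "(\<Sum>a\<in>UNIV. complex_of_real (z a) *
            (\<Sum>b\<in>UNIV. complex_of_real (v b) * (\<Sum>c\<in>UNIV. complex_of_real (w c) * T a b c)))
     = (\<Sum>a\<in>UNIV. \<Sum>b\<in>UNIV. \<Sum>c\<in>UNIV. complex_of_real (v b) * (complex_of_real (w c) *
            (complex_of_real (z a) * T a b c)))"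
    by (simp add: sum_distrib_left mult.left_commute)
  also have "\<dots> = (\<Sum>b\<in>UNIV. \<Sum>c\<in>UNIV. \<Sum>a\<in>UNIV. complex_of_real (v b) * (complex_of_real (w c) *
            (complex_of_real (z a) * T a b c)))"
    by (rule sum_rotate3')
  also have "\<dots> = (\<Sum>b\<in>UNIV. \<Sum>c\<in>UNIV. complex_of_real (v b) * (complex_of_real (w c) *
            (\<Sum>a\<in>UNIV. complex_of_real (z a) * T a b c)))"
    by (simp add: sum_distrib_left)
  finally have "(\<Sum>a\<in>UNIV. complex_of_real (z a) *
            (\<Sum>b\<in>UNIV. complex_of_real (v b) * (\<Sum>c\<in>UNIV. complex_of_real (w c) * T a b c)))
     = (\<Sum>b\<in>UNIV. \<Sum>c\<in>UNIV. complex_of_real (v b) * (complex_of_real (w c) *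
            (\<Sum>a\<in>UNIV. complex_of_real (z a) * T a b c)))" .
  then show ?thesis using assms by simp
qed

definition frame_components ::
    "(4 \<Rightarrow> 4 \<Rightarrow> real) \<Rightarrow> (4 \<Rightarrow> 4 \<Rightarrow> 4 \<Rightarrow> complex) \<Rightarrow> 4 \<Rightarrow> 4 \<Rightarrow> 4 \<Rightarrow> complex" where
  "frame_components w T k l m = (\<Sum>a\<in>UNIV. complex_of_real (w k a) *
      (\<Sum>b\<in>UNIV. complex_of_real (w l b) * (\<Sum>c\<in>UNIV. complex_of_real (w m c) * T a b c)))"

text \<open>Contracting T with its conjugate through K in all three index pairs: applying
  contract_split_orth slot by slot yields a positive combination of squared frame
  components.\<close>
lemma norm3_frame_expansion:
  fixes K :: "4 \<Rightarrow> 4 \<Rightarrow> real" and w :: "4 \<Rightarrow> 4 \<Rightarrow> real" and \<mu> :: "4 \<Rightarrow> real"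
    and z :: "4 \<Rightarrow> real" and T :: "4 \<Rightarrow> 4 \<Rightarrow> 4 \<Rightarrow> complex"
  assumes K: "\<forall>a d. K a d = (\<Sum>m\<in>UNIV. \<mu> m * w m a * w m d) + s * z a * z d"
    and o1: "\<forall>b c. (\<Sum>a\<in>UNIV. complex_of_real (z a) * T a b c) = 0"
    and o2: "\<forall>a c. (\<Sum>b\<in>UNIV. complex_of_real (z b) * T a b c) = 0"
    and o3: "\<forall>a b. (\<Sum>c\<in>UNIV. complex_of_real (z c) * T a b c) = 0"
  shows "(\<Sum>a\<in>UNIV. \<Sum>b\<in>UNIV. \<Sum>c\<in>UNIV. \<Sum>d\<in>UNIV. \<Sum>e\<in>UNIV. \<Sum>f\<in>UNIV.
            complex_of_real (K a d * K b e * K c f) * T a b c * cnj (T d e f))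
       = complex_of_real (\<Sum>m\<in>UNIV. \<Sum>l\<in>UNIV. \<Sum>k\<in>UNIV.
            \<mu> m * \<mu> l * \<mu> k * (cmod (frame_components w T k l m))\<^sup>2)"
    (is "?Q = _")
proof -
  define U where "U m a b = (\<Sum>c\<in>UNIV. complex_of_real (w m c) * T a b c)" for m a b
  define V where "V l m a = (\<Sum>b\<in>UNIV. complex_of_real (w l b) * U m a b)" for l m a
  have oU: "(\<Sum>b\<in>UNIV. complex_of_real (z b) * U m a b) = 0" for m a
    unfolding U_def by (rule orth_middle_after_contraction[OF o2])
  have oV: "(\<Sum>a\<in>UNIV. complex_of_real (z a) * V l m a) = 0" for l m
    unfolding V_def U_def by (rule orth_first_after_contraction[OF o1])
  let ?F = "\<lambda>a b c d e f. complex_of_real (K a d * K b e * K c f) * T a b c * cnj (T d e f)"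
  have "?Q = (\<Sum>a\<in>UNIV. \<Sum>d\<in>UNIV. \<Sum>b\<in>UNIV. \<Sum>e\<in>UNIV. \<Sum>c\<in>UNIV. \<Sum>f\<in>UNIV. ?F a b c d e f)"
    by (rule sum.cong[OF refl], subst sum_rotate3, rule sum.cong[OF refl], rule sum.cong[OF refl],
        rule sum.swap)
  also have "\<dots> = (\<Sum>a\<in>UNIV. \<Sum>d\<in>UNIV. \<Sum>b\<in>UNIV. \<Sum>e\<in>UNIV. complex_of_real (K a d) * complex_of_real (K b e) *
       (\<Sum>c\<in>UNIV. \<Sum>f\<in>UNIV. complex_of_real (K c f) * T a b c * cnj (T d e f)))"
    by (simp add: sum_distrib_left ac_simps)
  also have "\<dots> = (\<Sum>a\<in>UNIV. \<Sum>d\<in>UNIV. \<Sum>b\<in>UNIV. \<Sum>e\<in>UNIV. complex_of_real (K a d) * complex_of_real (K b e) *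
       (\<Sum>m\<in>UNIV. complex_of_real (\<mu> m) * U m a b * cnj (U m d e)))"
    unfolding U_def using o3 by (simp only: contract_split_orth[OF K])
  also have "\<dots> = (\<Sum>a\<in>UNIV. \<Sum>d\<in>UNIV. complex_of_real (K a d) * (\<Sum>m\<in>UNIV. complex_of_real (\<mu> m) *
       (\<Sum>b\<in>UNIV. \<Sum>e\<in>UNIV. complex_of_real (K b e) * U m a b * cnj (U m d e))))"
  proof (rule sum.cong[OF refl], rule sum.cong[OF refl])
    fix a d
    let ?B = "\<lambda>m b e. complex_of_real (K a d) * (complex_of_real (\<mu> m) *
        (complex_of_real (K b e) * U m a b * cnj (U m d e)))"
    have "(\<Sum>b\<in>UNIV. \<Sum>e\<in>UNIV. complex_of_real (K a d) * complex_of_real (K b e) *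
       (\<Sum>m\<in>UNIV. complex_of_real (\<mu> m) * U m a b * cnj (U m d e)))
      = (\<Sum>b\<in>UNIV. \<Sum>e\<in>UNIV. \<Sum>m\<in>UNIV. ?B m b e)"
      by (simp add: sum_distrib_left ac_simps)
    also have "\<dots> = (\<Sum>m\<in>UNIV. \<Sum>b\<in>UNIV. \<Sum>e\<in>UNIV. ?B m b e)"
      by (rule sum_rotate3)
    finally show "(\<Sum>b\<in>UNIV. \<Sum>e\<in>UNIV. complex_of_real (K a d) * complex_of_real (K b e) *
       (\<Sum>m\<in>UNIV. complex_of_real (\<mu> m) * U m a b * cnj (U m d e)))
      = complex_of_real (K a d) * (\<Sum>m\<in>UNIV. complex_of_real (\<mu> m) *
       (\<Sum>b\<in>UNIV. \<Sum>e\<in>UNIV. complex_of_real (K b e) * U m a b * cnj (U m d e)))"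
      by (simp add: sum_distrib_left)
  qed
  also have "\<dots> = (\<Sum>a\<in>UNIV. \<Sum>d\<in>UNIV. complex_of_real (K a d) * (\<Sum>m\<in>UNIV. complex_of_real (\<mu> m) *
       (\<Sum>l\<in>UNIV. complex_of_real (\<mu> l) * V l m a * cnj (V l m d))))"
    unfolding V_def using oU by (simp only: contract_split_orth[OF K])
  also have "\<dots> = (\<Sum>a\<in>UNIV. \<Sum>d\<in>UNIV. \<Sum>m\<in>UNIV. \<Sum>l\<in>UNIV.
       complex_of_real (\<mu> m) * complex_of_real (\<mu> l) * (complex_of_real (K a d) * V l m a * cnj (V l m d)))"
    by (simp add: sum_distrib_left ac_simps)
  also have "\<dots> = (\<Sum>m\<in>UNIV. \<Sum>l\<in>UNIV. \<Sum>a\<in>UNIV. \<Sum>d\<in>UNIV.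
       complex_of_real (\<mu> m) * complex_of_real (\<mu> l) * (complex_of_real (K a d) * V l m a * cnj (V l m d)))"
    by (rule sum_swap_pairs)
  also have "\<dots> = (\<Sum>m\<in>UNIV. \<Sum>l\<in>UNIV. complex_of_real (\<mu> m) * complex_of_real (\<mu> l) *
       (\<Sum>a\<in>UNIV. \<Sum>d\<in>UNIV. complex_of_real (K a d) * V l m a * cnj (V l m d)))"
    by (simp add: sum_distrib_left)
  also have "\<dots> = (\<Sum>m\<in>UNIV. \<Sum>l\<in>UNIV. complex_of_real (\<mu> m) * complex_of_real (\<mu> l) *
       (\<Sum>k\<in>UNIV. complex_of_real (\<mu> k) * frame_components w T k l m * cnj (frame_components w T k l m)))"
    unfolding frame_components_def V_def[symmetric] U_def[symmetric] using oV
    by (simp only: contract_split_orth[OF K])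
  also have "\<dots> = complex_of_real (\<Sum>m\<in>UNIV. \<Sum>l\<in>UNIV. \<Sum>k\<in>UNIV.
            \<mu> m * \<mu> l * \<mu> k * (cmod (frame_components w T k l m))\<^sup>2)"
    by (simp add: complex_norm_square[symmetric] of_real_sum sum_distrib_left mult.assoc del: of_real_power)
  finally show ?thesis .
qed

lemma frame_components_zero:
  fixes K G :: "4 \<Rightarrow> 4 \<Rightarrow> real" and w :: "4 \<Rightarrow> 4 \<Rightarrow> real" and \<mu> :: "4 \<Rightarrow> real"
    and z :: "4 \<Rightarrow> real" and T :: "4 \<Rightarrow> 4 \<Rightarrow> 4 \<Rightarrow> complex"
  assumes K: "\<forall>a d. K a d = (\<Sum>m\<in>UNIV. \<mu> m * w m a * w m d) + s * z a * z d"
    and GK: "\<forall>a c. (\<Sum>b\<in>UNIV. G a b * K b c) = (if a = c then 1 else 0)"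
    and o1: "\<forall>b c. (\<Sum>a\<in>UNIV. complex_of_real (z a) * T a b c) = 0"
    and o2: "\<forall>a c. (\<Sum>b\<in>UNIV. complex_of_real (z b) * T a b c) = 0"
    and o3: "\<forall>a b. (\<Sum>c\<in>UNIV. complex_of_real (z c) * T a b c) = 0"
    and W0: "\<forall>k l m. frame_components w T k l m = 0"
  shows "T a b c = 0"
proof -
  define U where "U m a b = (\<Sum>c\<in>UNIV. complex_of_real (w m c) * T a b c)" for m a b
  define V where "V l m a = (\<Sum>b\<in>UNIV. complex_of_real (w l b) * U m a b)" for l m a
  have oU: "(\<Sum>b\<in>UNIV. complex_of_real (z b) * U m a b) = 0" for m a
    unfolding U_def by (rule orth_middle_after_contraction[OF o2])
  have oV: "(\<Sum>a\<in>UNIV. complex_of_real (z a) * V l m a) = 0" for l m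
    unfolding V_def U_def by (rule orth_first_after_contraction[OF o1])
  have V0: "V l m a = 0" for l m a
    by (rule orth_split_vanishes[OF K GK oV]) (use W0 in \<open>simp add: frame_components_def V_def U_def\<close>)
  have U0: "U m a b = 0" for m a b
    by (rule orth_split_vanishes[OF K GK oU]) (use V0 in \<open>simp add: V_def\<close>)
  show ?thesis
    by (rule orth_split_vanishes[where X="\<lambda>c. T a b c", OF K GK]) (use o3 U0 in \<open>simp_all add: U_def\<close>)
qed

lemma norm3_nonneg:
  fixes K G :: "4 \<Rightarrow> 4 \<Rightarrow> real" and w :: "4 \<Rightarrow> 4 \<Rightarrow> real" and \<mu> :: "4 \<Rightarrow> real"
    and z :: "4 \<Rightarrow> real" and T :: "4 \<Rightarrow> 4 \<Rightarrow> 4 \<Rightarrow> complex"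
  assumes K: "\<forall>a d. K a d = (\<Sum>m\<in>UNIV. \<mu> m * w m a * w m d) + s * z a * z d"
    and GK: "\<forall>a c. (\<Sum>b\<in>UNIV. G a b * K b c) = (if a = c then 1 else 0)"
    and mupos: "\<forall>m. \<mu> m > 0"
    and o1: "\<forall>b c. (\<Sum>a\<in>UNIV. complex_of_real (z a) * T a b c) = 0"
    and o2: "\<forall>a c. (\<Sum>b\<in>UNIV. complex_of_real (z b) * T a b c) = 0"
    and o3: "\<forall>a b. (\<Sum>c\<in>UNIV. complex_of_real (z c) * T a b c) = 0"
  defines "Q \<equiv> (\<Sum>a\<in>UNIV. \<Sum>b\<in>UNIV. \<Sum>c\<in>UNIV. \<Sum>d\<in>UNIV. \<Sum>e\<in>UNIV. \<Sum>f\<in>UNIV.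
      complex_of_real (K a d * K b e * K c f) * T a b c * cnj (T d e f))"
  shows "Q \<in> \<real> \<and> Re Q \<ge> 0 \<and> (Q = 0 \<longleftrightarrow> (\<forall>a b c. T a b c = 0))"
proof -
  define t where "t k l m = \<mu> m * \<mu> l * \<mu> k * (cmod (frame_components w T k l m))\<^sup>2" for k l m
  define R where "R = (\<Sum>m\<in>UNIV. \<Sum>l\<in>UNIV. \<Sum>k\<in>UNIV. t k l m)"
  have QR: "Q = complex_of_real R"
    unfolding Q_def R_def t_def by (rule norm3_frame_expansion[OF K o1 o2 o3])
  have t_nonneg: "t k l m \<ge> 0" for k l m
    using mupos by (simp add: t_def less_imp_le)
  have R_nonneg: "R \<ge> 0" unfolding R_def by (intro sum_nonneg t_nonneg)
  have "frame_components w T k l m = 0" if "R = 0" for k l m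
  proof -
    have "t k l m = 0"
      using that t_nonneg unfolding R_def by (simp add: sum_nonneg_eq_0_iff sum_nonneg)
    then show ?thesis using mupos[rule_format, of m] mupos[rule_format, of l] mupos[rule_format, of k]
      by (simp add: t_def)
  qed
  then have "R = 0 \<Longrightarrow> T a b c = 0" for a b c
    using frame_components_zero[OF K GK o1 o2 o3] by blast
  moreover have "(\<forall>a b c. T a b c = 0) \<Longrightarrow> Q = 0" unfolding Q_def by simp
  ultimately show ?thesis using QR R_nonneg by auto
qed


section \<open>Orthogonality of a tensor of Simon type\<close>

lemma antisym_contract:
  fixes A :: "4 \<Rightarrow> 4 \<Rightarrow> complex" and z :: "4 \<Rightarrow> real"
  assumes "\<forall>i j. A i j = - A j i"
  shows "(\<Sum>i\<in>UNIV. \<Sum>j\<in>UNIV. complex_of_real (z i) * complex_of_real (z j) * A i j) = 0"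
proof -
  let ?S = "(\<Sum>i\<in>UNIV. \<Sum>j\<in>UNIV. complex_of_real (z i) * complex_of_real (z j) * A i j)"
  have "?S = (\<Sum>j\<in>UNIV. \<Sum>i\<in>UNIV. complex_of_real (z i) * complex_of_real (z j) * A i j)"
    by (rule sum.swap)
  also have "\<dots> = (\<Sum>j\<in>UNIV. \<Sum>i\<in>UNIV. - (complex_of_real (z j) * complex_of_real (z i) * A j i))"
    by (intro sum.cong refl, subst assms[rule_format], simp)
  also have "\<dots> = - ?S" by (simp add: sum_negf)
  finally show ?thesis by simp
qed

lemma electric_part_orth_first:
  fixes z :: "4 \<Rightarrow> real" and C :: "4 \<Rightarrow> 4 \<Rightarrow> 4 \<Rightarrow> 4 \<Rightarrow> complex"
  assumes C1: "\<forall>a b c d. C a b c d = - C b a c d"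
  shows "(\<Sum>a\<in>UNIV. complex_of_real (z a) *
            (\<Sum>m\<in>UNIV. \<Sum>r\<in>UNIV. complex_of_real (z m * z r) * C m a r c)) = 0"
proof -
  have "(\<Sum>a\<in>UNIV. complex_of_real (z a) * (\<Sum>m\<in>UNIV. \<Sum>r\<in>UNIV. complex_of_real (z m * z r) * C m a r c))
     = (\<Sum>a\<in>UNIV. \<Sum>m\<in>UNIV. complex_of_real (z a) * complex_of_real (z m) *
          (\<Sum>r\<in>UNIV. complex_of_real (z r) * C m a r c))"
    by (simp add: sum_distrib_left ac_simps)
  also have "\<dots> = 0"
  proof (rule antisym_contract, intro allI)
    fix i j
    have "(\<Sum>r\<in>UNIV. complex_of_real (z r) * C j i r c) = (\<Sum>r\<in>UNIV. - (complex_of_real (z r) * C i j r c))"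
      by (rule sum.cong[OF refl], subst C1[rule_format], simp)
    then show "(\<Sum>r\<in>UNIV. complex_of_real (z r) * C j i r c) = - (\<Sum>r\<in>UNIV. complex_of_real (z r) * C i j r c)"
      by (simp add: sum_negf)
  qed
  finally show ?thesis .
qed

lemma electric_part_orth_second:
  fixes z :: "4 \<Rightarrow> real" and C :: "4 \<Rightarrow> 4 \<Rightarrow> 4 \<Rightarrow> 4 \<Rightarrow> complex"
  assumes C2: "\<forall>a b c d. C a b c d = - C a b d c"
  shows "(\<Sum>b\<in>UNIV. complex_of_real (z b) *
            (\<Sum>m\<in>UNIV. \<Sum>r\<in>UNIV. complex_of_real (z m * z r) * C m a r b)) = 0"
proof -
  have "(\<Sum>b\<in>UNIV. complex_of_real (z b) * (\<Sum>m\<in>UNIV. \<Sum>r\<in>UNIV. complex_of_real (z m * z r) * C m a r b))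
     = (\<Sum>b\<in>UNIV. \<Sum>m\<in>UNIV. \<Sum>r\<in>UNIV. complex_of_real (z m) * (complex_of_real (z r) * complex_of_real (z b) * C m a r b))"
    by (simp add: sum_distrib_left ac_simps)
  also have "\<dots> = (\<Sum>m\<in>UNIV. \<Sum>r\<in>UNIV. \<Sum>b\<in>UNIV. complex_of_real (z m) * (complex_of_real (z r) * complex_of_real (z b) * C m a r b))"
    by (rule sum_rotate3')
  also have "\<dots> = (\<Sum>m\<in>UNIV. complex_of_real (z m) *
      (\<Sum>r\<in>UNIV. \<Sum>b\<in>UNIV. complex_of_real (z r) * complex_of_real (z b) * C m a r b))"
    by (simp add: sum_distrib_left)
  also have "\<dots> = 0"
  proof -
    have "(\<Sum>r\<in>UNIV. \<Sum>b\<in>UNIV. complex_of_real (z r) * complex_of_real (z b) * C m a r b) = 0" for m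
      by (rule antisym_contract, intro allI, rule C2[rule_format])
    then show ?thesis by simp
  qed
  finally show ?thesis .
qed

lemma simon_form_orthogonal:
  fixes gam :: "4 \<Rightarrow> 4 \<Rightarrow> real" and z :: "4 \<Rightarrow> real" and X sig :: "4 \<Rightarrow> complex"
    and C :: "4 \<Rightarrow> 4 \<Rightarrow> 4 \<Rightarrow> 4 \<Rightarrow> complex"
  assumes S: "\<And>a b c. S a b c = (1/2) * (complex_of_real (gam a b) * X c - complex_of_real (gam a c) * X b)
       + 4 * (\<Sum>m\<in>UNIV. \<Sum>r\<in>UNIV. complex_of_real (z m * z r) *
        ((1/2) * (C m a r c * sig b - C m a r b * sig c)))"
    and g1: "\<forall>b. (\<Sum>a\<in>UNIV. z a * gam a b) = 0"
    and g2: "\<forall>a. (\<Sum>b\<in>UNIV. z b * gam a b) = 0"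
    and Xo: "(\<Sum>b\<in>UNIV. complex_of_real (z b) * X b) = 0"
    and so: "(\<Sum>b\<in>UNIV. complex_of_real (z b) * sig b) = 0"
    and C1: "\<forall>a b c d. C a b c d = - C b a c d"
    and C2: "\<forall>a b c d. C a b c d = - C a b d c"
  shows "\<forall>b c. (\<Sum>a\<in>UNIV. complex_of_real (z a) * S a b c) = 0"
    and "\<forall>a c. (\<Sum>b\<in>UNIV. complex_of_real (z b) * S a b c) = 0"
    and "\<forall>a b. (\<Sum>c\<in>UNIV. complex_of_real (z c) * S a b c) = 0"
proof -
  define D where "D a c = (\<Sum>m\<in>UNIV. \<Sum>r\<in>UNIV. complex_of_real (z m * z r) * C m a r c)" for a c
  have S': "S a b c = (1/2) * (complex_of_real (gam a b) * X c - complex_of_real (gam a c) * X b)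
      + 2 * sig b * D a c - 2 * sig c * D a b" for a b c
  proof -
    have "complex_of_real (z m * z r) * ((1/2) * (C m a r c * sig b - C m a r b * sig c))
       = (1/2) * sig b * (complex_of_real (z m * z r) * C m a r c)
         - (1/2) * sig c * (complex_of_real (z m * z r) * C m a r b)" for m r
      by (simp add: algebra_simps)
    then show ?thesis
      unfolding S D_def by (simp add: sum_subtractf sum_distrib_left algebra_simps)
  qed
  have DA: "(\<Sum>a\<in>UNIV. complex_of_real (z a) * D a c) = 0" for c
    unfolding D_def by (rule electric_part_orth_first[OF C1])
  have DB: "(\<Sum>b\<in>UNIV. complex_of_real (z b) * D a b) = 0" for a
    unfolding D_def by (rule electric_part_orth_second[OF C2])
  have o1: "(\<Sum>a\<in>UNIV. complex_of_real (z a) * S a b c) = 0" for b c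
  proof -
    have "(\<Sum>a\<in>UNIV. complex_of_real (z a) * S a b c)
      = (1/2) * X c * complex_of_real (\<Sum>a\<in>UNIV. z a * gam a b) - (1/2) * X b * complex_of_real (\<Sum>a\<in>UNIV. z a * gam a c)
        + 2 * sig b * (\<Sum>a\<in>UNIV. complex_of_real (z a) * D a c) - 2 * sig c * (\<Sum>a\<in>UNIV. complex_of_real (z a) * D a b)"
      unfolding S' by (simp add: sum_distrib_left sum.distrib sum_subtractf of_real_sum algebra_simps)
    then show ?thesis using g1 DA by simp
  qed
  have o2: "(\<Sum>b\<in>UNIV. complex_of_real (z b) * S a b c) = 0" for a c
  proof -
    have "(\<Sum>b\<in>UNIV. complex_of_real (z b) * S a b c)
      = (1/2) * X c * complex_of_real (\<Sum>b\<in>UNIV. z b * gam a b) - (1/2) * complex_of_real (gam a c) * (\<Sum>b\<in>UNIV. complex_of_real (z b) * X b)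
        + 2 * D a c * (\<Sum>b\<in>UNIV. complex_of_real (z b) * sig b) - 2 * sig c * (\<Sum>b\<in>UNIV. complex_of_real (z b) * D a b)"
      unfolding S' by (simp add: sum_distrib_left sum.distrib sum_subtractf of_real_sum algebra_simps)
    then show ?thesis using g2 Xo so DB by simp
  qed
  text \<open>The third index follows from the second by the antisymmetry S_{abc} = - S_{acb}.\<close>
  have o3: "(\<Sum>c\<in>UNIV. complex_of_real (z c) * S a b c) = 0" for a b
  proof -
    have "S a b c = - S a c b" for c
      unfolding S' by (simp add: algebra_simps)
    then have "(\<Sum>c\<in>UNIV. complex_of_real (z c) * S a b c) = - (\<Sum>c\<in>UNIV. complex_of_real (z c) * S a c b)"
      by (simp add: sum_negf[symmetric])
    then show ?thesis using o2[of a b] by simp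
  qed
  show "\<forall>b c. (\<Sum>a\<in>UNIV. complex_of_real (z a) * S a b c) = 0" using o1 by blast
  show "\<forall>a c. (\<Sum>b\<in>UNIV. complex_of_real (z b) * S a b c) = 0" using o2 by blast
  show "\<forall>a b. (\<Sum>c\<in>UNIV. complex_of_real (z c) * S a b c) = 0" using o3 by blast
qed


section \<open>Index symmetries of the tensors of the chart description\<close>

text \<open>The Levi-Civita symbol is a product of signs over the six index pairs; swapping
  the first two indices flips exactly one of them.\<close>
lemma pairs_below_4: "{(i, j). i < j \<and> j < (4::nat)} = {(0,1),(0,2),(0,3),(1,2),(1,3),(2,3)}"
  by (auto simp: numeral_eq_Suc less_Suc_eq)

lemma levi_civita_explicit:
  "levi_civita a b c d = real_of_int (
     sgn (Rep_bit0 b - Rep_bit0 a) * sgn (Rep_bit0 c - Rep_bit0 a) * sgn (Rep_bit0 d - Rep_bit0 a) *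
     sgn (Rep_bit0 c - Rep_bit0 b) * sgn (Rep_bit0 d - Rep_bit0 b) * sgn (Rep_bit0 d - Rep_bit0 c))"
  unfolding levi_civita_def Let_def pairs_below_4 by (simp add: ac_simps)

lemma sgn_diff_swap: "sgn (x - y :: int) = - sgn (y - x)"
  by (simp add: sgn_if)

lemma levi_civita_anti: "levi_civita a b c d = - levi_civita b a c d"
  unfolding levi_civita_explicit
  by (simp add: sgn_diff_swap[of "Rep_bit0 b" "Rep_bit0 a"] ac_simps)

lemma vol_anti: "vol g x a b c d = - vol g x b a c d"
  unfolding vol_def by (subst levi_civita_anti) simp

text \<open>Dualising on a pair inherits the antisymmetry of the volume form in that pair.\<close>
lemma F_dual_anti: "F_dual g \<zeta> x a b = - F_dual g \<zeta> x b a"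
proof -
  have "F_dual g \<zeta> x a b = (1/2) * (\<Sum>c\<in>UNIV. \<Sum>d\<in>UNIV. - (vol g x b a c d * F_up g \<zeta> x c d))"
    unfolding F_dual_def by (intro arg_cong[where f="\<lambda>t. (1/2) * t"] sum.cong refl, subst vol_anti, simp)
  then show ?thesis unfolding F_dual_def by (simp add: sum_negf)
qed

lemma riemann_up_anti: "riemann_up g x a b c d = - riemann_up g x a b d c"
  unfolding riemann_up_def by (simp add: sum_subtractf)

lemma riemann_anti_second: "riemann g x a b c d = - riemann g x a b d c"
  unfolding riemann_def by (subst riemann_up_anti) (simp add: sum_negf)

lemma weyl_anti_second: "weyl g x a b c d = - weyl g x a b d c"
  unfolding weyl_def by (subst riemann_anti_second) (simp add: algebra_simps)

text \<open>The Ricci and scalar corrections in the Weyl tensor are antisymmetric in the first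
  pair by construction, so the Weyl tensor inherits first-pair antisymmetry from Riemann.\<close>
lemma weyl_anti_first:
  assumes "riemann g x a b c d = - riemann g x b a c d"
  shows "weyl g x a b c d = - weyl g x b a c d"
  unfolding weyl_def using assms by (simp add: algebra_simps)

lemma weyl_dual_anti_second: "weyl_dual g x a b c d = - weyl_dual g x a b d c"
proof -
  have "weyl_dual g x a b c d = (1/2) * (\<Sum>p\<in>UNIV. \<Sum>q\<in>UNIV. - (vol g x d c p q *
      (\<Sum>e\<in>UNIV. \<Sum>f\<in>UNIV. ginv g x p e * ginv g x q f * weyl g x a b e f)))"
    unfolding weyl_dual_def by (intro arg_cong[where f="\<lambda>t. (1/2) * t"] sum.cong refl, subst vol_anti, simp)
  then show ?thesis unfolding weyl_dual_def by (simp add: sum_negf)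
qed

lemma weyl_dual_anti_first:
  assumes "\<forall>e f. weyl g x a b e f = - weyl g x b a e f"
  shows "weyl_dual g x a b c d = - weyl_dual g x b a c d"
proof -
  have "weyl_dual g x a b c d = (1/2) * (\<Sum>p\<in>UNIV. \<Sum>q\<in>UNIV. vol g x c d p q *
      (\<Sum>e\<in>UNIV. \<Sum>f\<in>UNIV. - (ginv g x p e * ginv g x q f * weyl g x b a e f)))"
    unfolding weyl_dual_def using assms by simp
  then show ?thesis unfolding weyl_dual_def by (simp add: sum_negf)
qed

lemma calC_anti_first:
  assumes riem: "\<forall>a b c d. riemann g x a b c d = - riemann g x b a c d"
  shows "calC g x a b c d = - calC g x b a c d"
proof -
  have "\<forall>e f. weyl g x a b e f = - weyl g x b a e f"
    using weyl_anti_first riem by blast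
  then show ?thesis
    unfolding calC_def by (subst weyl_anti_first[OF riem[rule_format]], subst weyl_dual_anti_first) simp_all
qed

lemma calC_anti_second: "calC g x a b c d = - calC g x a b d c"
  unfolding calC_def by (subst weyl_anti_second, subst weyl_dual_anti_second) simp

lemma calF_anti:
  assumes kill: "Fkill g \<zeta> x a b + Fkill g \<zeta> x b a = 0"
  shows "calF g \<zeta> x a b = - calF g \<zeta> x b a"
proof -
  have "Fkill g \<zeta> x a b = - Fkill g \<zeta> x b a" using kill by (simp add: eq_neg_iff_add_eq_0)
  then show ?thesis unfolding calF_def by (subst F_dual_anti) simp
qed


section \<open>The Simon tensor is orthogonal to the Killing vector\<close>

text \<open>\<gamma>_{ab} = \<zeta>_a \<zeta>_b - \<lambda> g_{ab} is the projector orthogonal to \<zeta>, up to the factor -\<lambda>.\<close>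
lemma gamma_orth:
  assumes gsym: "\<forall>a b. g x a b = g x b a"
  shows "(\<Sum>a\<in>UNIV. \<zeta> x a * gamma g \<zeta> x a b) = 0"
    and "(\<Sum>b\<in>UNIV. \<zeta> x b * gamma g \<zeta> x a b) = 0"
proof -
  have zl: "(\<Sum>a\<in>UNIV. g x a b * \<zeta> x a) = zeta_low g \<zeta> x b" for b
    unfolding zeta_low_def by (rule sum.cong[OF refl]) (metis gsym)
  have "(\<Sum>a\<in>UNIV. \<zeta> x a * gamma g \<zeta> x a b)
      = (\<Sum>a\<in>UNIV. zeta_low g \<zeta> x a * \<zeta> x a) * zeta_low g \<zeta> x b - lam g \<zeta> x * (\<Sum>a\<in>UNIV. g x a b * \<zeta> x a)"
    unfolding gamma_def by (simp add: right_diff_distrib sum_subtractf sum_distrib_left sum_distrib_right ac_simps)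
  then show "(\<Sum>a\<in>UNIV. \<zeta> x a * gamma g \<zeta> x a b) = 0"
    using zl by (simp add: lam_def)
  have "(\<Sum>b\<in>UNIV. \<zeta> x b * gamma g \<zeta> x a b)
      = zeta_low g \<zeta> x a * (\<Sum>b\<in>UNIV. zeta_low g \<zeta> x b * \<zeta> x b) - lam g \<zeta> x * (\<Sum>b\<in>UNIV. g x a b * \<zeta> x b)"
    unfolding gamma_def by (simp add: right_diff_distrib sum_subtractf sum_distrib_left sum_distrib_right ac_simps)
  then show "(\<Sum>b\<in>UNIV. \<zeta> x b * gamma g \<zeta> x a b) = 0"
    by (simp add: lam_def zeta_low_def)
qed

text \<open>X_c = \<C>_{cmrd} \<zeta>^m \<F>^{rd} is orthogonal to \<zeta> because \<C> is antisymmetric in (c,m).\<close>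
lemma simonX_orth:
  assumes riem: "\<forall>a b c d. riemann g x a b c d = - riemann g x b a c d"
  shows "(\<Sum>c\<in>UNIV. complex_of_real (\<zeta> x c) * simonX g \<zeta> x c) = 0"
proof -
  have "(\<Sum>c\<in>UNIV. complex_of_real (\<zeta> x c) * simonX g \<zeta> x c)
      = (\<Sum>c\<in>UNIV. \<Sum>m\<in>UNIV. complex_of_real (\<zeta> x c) * complex_of_real (\<zeta> x m) *
          (\<Sum>r\<in>UNIV. \<Sum>d\<in>UNIV. calC g x c m r d * calF_up g \<zeta> x r d))"
    unfolding simonX_def by (simp add: sum_distrib_left ac_simps)
  also have "\<dots> = 0"
  proof (rule antisym_contract, intro allI)
    fix i j
    show "(\<Sum>r\<in>UNIV. \<Sum>d\<in>UNIV. calC g x i j r d * calF_up g \<zeta> x r d)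
       = - (\<Sum>r\<in>UNIV. \<Sum>d\<in>UNIV. calC g x j i r d * calF_up g \<zeta> x r d)"
      by (simp add: sum_negf[symmetric], intro sum.cong refl, subst calC_anti_first[OF riem], simp)
  qed
  finally show ?thesis .
qed

text \<open>The Ernst one-form \<sigma>_a = 2 \<F>_{ab} \<zeta>^b is orthogonal to \<zeta> because \<F> is antisymmetric.\<close>
lemma ernst_orth:
  assumes kill: "\<forall>a b. Fkill g \<zeta> x a b + Fkill g \<zeta> x b a = 0"
  shows "(\<Sum>b\<in>UNIV. complex_of_real (\<zeta> x b) * ernst g \<zeta> x b) = 0"
proof -
  have "(\<Sum>b\<in>UNIV. complex_of_real (\<zeta> x b) * ernst g \<zeta> x b)
      = 2 * (\<Sum>b\<in>UNIV. \<Sum>d\<in>UNIV. complex_of_real (\<zeta> x b) * complex_of_real (\<zeta> x d) * calF g \<zeta> x b d)"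
    unfolding ernst_def by (simp add: sum_distrib_left ac_simps)
  also have "\<dots> = 0"
    by (simp, rule antisym_contract, intro allI, rule calF_anti, use kill in blast)
  finally show ?thesis .
qed

lemma simon_orthogonal:
  assumes gsym: "\<forall>a b. g x a b = g x b a"
    and kill: "\<forall>a b. Fkill g \<zeta> x a b + Fkill g \<zeta> x b a = 0"
    and riem: "\<forall>a b c d. riemann g x a b c d = - riemann g x b a c d"
  shows "\<forall>b c. (\<Sum>a\<in>UNIV. complex_of_real (\<zeta> x a) * simon g \<zeta> x a b c) = 0"
    and "\<forall>a c. (\<Sum>b\<in>UNIV. complex_of_real (\<zeta> x b) * simon g \<zeta> x a b c) = 0"
    and "\<forall>a b. (\<Sum>c\<in>UNIV. complex_of_real (\<zeta> x c) * simon g \<zeta> x a b c) = 0"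
proof -
  have S: "simon g \<zeta> x a b c = (1/2) * (complex_of_real (gamma g \<zeta> x a b) * simonX g \<zeta> x c
        - complex_of_real (gamma g \<zeta> x a c) * simonX g \<zeta> x b)
      + 4 * (\<Sum>m\<in>UNIV. \<Sum>r\<in>UNIV. complex_of_real (\<zeta> x m * \<zeta> x r) *
        ((1/2) * (calC g x m a r c * ernst g \<zeta> x b - calC g x m a r b * ernst g \<zeta> x c)))" for a b c
    unfolding simon_def ..
  have g1: "\<forall>b. (\<Sum>a\<in>UNIV. \<zeta> x a * gamma g \<zeta> x a b) = 0"
    and g2: "\<forall>a. (\<Sum>b\<in>UNIV. \<zeta> x b * gamma g \<zeta> x a b) = 0"
    using gamma_orth[where g=g and x=x and \<zeta>=\<zeta>, OF gsym] by blast+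
  have C1: "\<forall>a b c d. calC g x a b c d = - calC g x b a c d"
    using calC_anti_first[where g=g and x=x, OF riem] by blast
  have C2: "\<forall>a b c d. calC g x a b c d = - calC g x a b d c"
    using calC_anti_second by blast
  note orth = simon_form_orthogonal[OF S g1 g2 simonX_orth[where \<zeta>=\<zeta>, OF riem] ernst_orth[OF kill] C1 C2]
  show "\<forall>b c. (\<Sum>a\<in>UNIV. complex_of_real (\<zeta> x a) * simon g \<zeta> x a b c) = 0"
    and "\<forall>a c. (\<Sum>b\<in>UNIV. complex_of_real (\<zeta> x b) * simon g \<zeta> x a b c) = 0"
    and "\<forall>a b. (\<Sum>c\<in>UNIV. complex_of_real (\<zeta> x c) * simon g \<zeta> x a b c) = 0"
    by (fact orth(1), fact orth(2), fact orth(3))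
qed


section \<open>Partial derivatives in the chart\<close>

definition axis_differentiable :: "idx \<Rightarrow> (pt \<Rightarrow> real) \<Rightarrow> pt \<Rightarrow> bool" where
  "axis_differentiable i f y \<longleftrightarrow> (\<lambda>t. f (y + t *\<^sub>R axis i 1)) differentiable (at 0)"

lemma pd_has_derivative: "axis_differentiable i f y \<Longrightarrow> ((\<lambda>t. f (y + t *\<^sub>R axis i 1)) has_real_derivative pd i f y) (at 0)"
  unfolding axis_differentiable_def pd_def by (simp add: DERIV_deriv_iff_real_differentiable)

lemma pd_eqI:
  assumes "((\<lambda>t. f (y + t *\<^sub>R axis i 1)) has_real_derivative D) (at 0)"
  shows "pd i f y = D"
  using assms unfolding pd_def by (rule DERIV_imp_deriv)

lemma pd_has_derivative_along:
  assumes "axis_differentiable i f (p + c *\<^sub>R axis i 1)"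
  shows "((\<lambda>u. f (p + u *\<^sub>R axis i 1)) has_real_derivative pd i f (p + c *\<^sub>R axis i 1)) (at c)"
proof -
  have "((\<lambda>h. f (p + c *\<^sub>R axis i 1 + h *\<^sub>R axis i 1)) has_real_derivative pd i f (p + c *\<^sub>R axis i 1)) (at 0)"
    using pd_has_derivative[OF assms] .
  moreover have "(\<lambda>h. f (p + c *\<^sub>R axis i 1 + h *\<^sub>R axis i 1)) = (\<lambda>h. (\<lambda>u. f (p + u *\<^sub>R axis i 1)) (h + c))"
    by (simp add: scaleR_add_left algebra_simps)
  ultimately have "((\<lambda>h. (\<lambda>u. f (p + u *\<^sub>R axis i 1)) (h + c)) has_real_derivative pd i f (p + c *\<^sub>R axis i 1)) (at 0)"
    by simp
  then show ?thesis using DERIV_shift[of "\<lambda>u. f (p + u *\<^sub>R axis i 1)" _ 0 c] by simp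
qed

lemma smooth_axis_differentiable: "smooth_on U f \<Longrightarrow> y \<in> U \<Longrightarrow> axis_differentiable i (iter_pd is f) y"
  unfolding smooth_on_def axis_differentiable_def by blast

lemma smooth_isCont: "smooth_on U f \<Longrightarrow> open U \<Longrightarrow> y \<in> U \<Longrightarrow> isCont (iter_pd is f) y"
  unfolding smooth_on_def using continuous_on_eq_continuous_at by blast

text \<open>Applying the mean value theorem twice: the second difference of f over a small
  coordinate square is s^2 times a mixed partial derivative at an interior point.\<close>
lemma mixed_difference_mvt:
  assumes ball: "ball x r \<subseteq> U" and sm: "smooth_on U f" and s: "0 < s" "2 * s < r"
  shows "\<exists>\<xi> \<eta>. 0 < \<xi> \<and> \<xi> < s \<and> 0 < \<eta> \<and> \<eta> < s \<and>
    f (x + s *\<^sub>R axis i 1 + s *\<^sub>R axis j 1) - f (x + s *\<^sub>R axis i 1) - f (x + s *\<^sub>R axis j 1) + f x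
      = s * s * pd j (pd i f) (x + \<xi> *\<^sub>R axis i 1 + \<eta> *\<^sub>R axis j 1)"
proof -
  let ?ei = "axis i 1 :: real^4" and ?ej = "axis j 1 :: real^4"
  have inU: "x + u *\<^sub>R ?ei + v *\<^sub>R ?ej \<in> U" if "0 \<le> u" "u \<le> s" "0 \<le> v" "v \<le> s" for u v
  proof -
    have "norm (u *\<^sub>R ?ei + v *\<^sub>R ?ej) \<le> norm (u *\<^sub>R ?ei) + norm (v *\<^sub>R ?ej)" by (rule norm_triangle_ineq)
    also have "\<dots> = u + v" using that by simp
    finally have "norm (u *\<^sub>R ?ei + v *\<^sub>R ?ej) < r" using that s by simp
    then have "dist (x + (u *\<^sub>R ?ei + v *\<^sub>R ?ej)) x < r" by (simp add: dist_norm)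
    then have "x + u *\<^sub>R ?ei + v *\<^sub>R ?ej \<in> ball x r" by (simp add: mem_ball dist_commute add.assoc)
    then show ?thesis using ball by blast
  qed
  define \<phi> where "\<phi> u = f (x + s *\<^sub>R ?ej + u *\<^sub>R ?ei) - f (x + u *\<^sub>R ?ei)" for u
  have d\<phi>: "(\<phi> has_real_derivative (pd i f (x + s *\<^sub>R ?ej + u *\<^sub>R ?ei) - pd i f (x + u *\<^sub>R ?ei))) (at u)"
    if "0 \<le> u" "u \<le> s" for u
  proof -
    have p1: "x + s *\<^sub>R ?ej + u *\<^sub>R ?ei \<in> U" using inU[of u s] that s by (simp add: add_ac)
    have p2: "x + u *\<^sub>R ?ei \<in> U" using inU[of u 0] that s by simp
    have "axis_differentiable i (iter_pd [] f) (x + s *\<^sub>R ?ej + u *\<^sub>R ?ei)" by (rule smooth_axis_differentiable[OF sm p1])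
    then have A: "((\<lambda>u. f (x + s *\<^sub>R ?ej + u *\<^sub>R ?ei)) has_real_derivative pd i f (x + s *\<^sub>R ?ej + u *\<^sub>R ?ei)) (at u)"
      using pd_has_derivative_along[of i f "x + s *\<^sub>R ?ej" u] by simp
    have "axis_differentiable i (iter_pd [] f) (x + u *\<^sub>R ?ei)" by (rule smooth_axis_differentiable[OF sm p2])
    then have B: "((\<lambda>u. f (x + u *\<^sub>R ?ei)) has_real_derivative pd i f (x + u *\<^sub>R ?ei)) (at u)"
      using pd_has_derivative_along[of i f x u] by simp
    show ?thesis unfolding \<phi>_def by (rule DERIV_diff[OF A B])
  qed
  obtain \<xi> where \<xi>: "0 < \<xi>" "\<xi> < s"
    and e1: "\<phi> s - \<phi> 0 = (s - 0) * (pd i f (x + s *\<^sub>R ?ej + \<xi> *\<^sub>R ?ei) - pd i f (x + \<xi> *\<^sub>R ?ei))"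
    using MVT2[OF s(1), of \<phi> "\<lambda>u. pd i f (x + s *\<^sub>R ?ej + u *\<^sub>R ?ei) - pd i f (x + u *\<^sub>R ?ei)"] d\<phi> by auto
  define \<psi> where "\<psi> v = pd i f (x + \<xi> *\<^sub>R ?ei + v *\<^sub>R ?ej)" for v
  have d\<psi>: "(\<psi> has_real_derivative pd j (pd i f) (x + \<xi> *\<^sub>R ?ei + v *\<^sub>R ?ej)) (at v)"
    if "0 \<le> v" "v \<le> s" for v
  proof -
    have p: "x + \<xi> *\<^sub>R ?ei + v *\<^sub>R ?ej \<in> U" using inU[of \<xi> v] that \<xi> by simp
    have "axis_differentiable j (iter_pd [i] f) (x + \<xi> *\<^sub>R ?ei + v *\<^sub>R ?ej)" by (rule smooth_axis_differentiable[OF sm p])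
    then show ?thesis unfolding \<psi>_def using pd_has_derivative_along[of j "pd i f" "x + \<xi> *\<^sub>R ?ei" v] by simp
  qed
  obtain \<eta> where \<eta>: "0 < \<eta>" "\<eta> < s"
    and e2: "\<psi> s - \<psi> 0 = (s - 0) * pd j (pd i f) (x + \<xi> *\<^sub>R ?ei + \<eta> *\<^sub>R ?ej)"
    using MVT2[OF s(1), of \<psi> "\<lambda>v. pd j (pd i f) (x + \<xi> *\<^sub>R ?ei + v *\<^sub>R ?ej)"] d\<psi> by auto
  have "f (x + s *\<^sub>R ?ei + s *\<^sub>R ?ej) - f (x + s *\<^sub>R ?ei) - f (x + s *\<^sub>R ?ej) + f x = \<phi> s - \<phi> 0"
    unfolding \<phi>_def by (simp add: add_ac)
  also have "\<dots> = s * (\<psi> s - \<psi> 0)" using e1 unfolding \<psi>_def by (simp add: add_ac)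
  also have "\<dots> = s * s * pd j (pd i f) (x + \<xi> *\<^sub>R ?ei + \<eta> *\<^sub>R ?ej)" using e2 by simp
  finally show ?thesis using \<xi> \<eta> by blast
qed


lemma norm_two_axes:
  fixes x :: pt
  assumes "0 < \<xi>" "\<xi> < s" "0 < \<eta>" "\<eta> < s"
  shows "norm ((x + \<xi> *\<^sub>R axis i 1 + \<eta> *\<^sub>R axis j 1) - x) < 2 * s"
proof -
  have "norm ((x + \<xi> *\<^sub>R axis i 1 + \<eta> *\<^sub>R axis j 1) - x) = norm (\<xi> *\<^sub>R axis i (1::real) + \<eta> *\<^sub>R axis j 1)"
    by simp
  also have "\<dots> \<le> norm (\<xi> *\<^sub>R axis i (1::real)) + norm (\<eta> *\<^sub>R axis j (1::real))" by (rule norm_triangle_ineq)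
  also have "\<dots> = \<xi> + \<eta>" using assms by simp
  finally show ?thesis using assms by simp
qed

text \<open>Schwarz's theorem: mixed partial derivatives of a smooth function commute.  Both
  orders of differentiation compute the same second difference, and both mixed
  derivatives are continuous at x.\<close>
lemma pd_commute:
  assumes U: "open U" "x \<in> U" and sm: "smooth_on U f"
  shows "pd i (pd j f) x = pd j (pd i f) x"
proof (rule ccontr)
  assume ne: "pd i (pd j f) x \<noteq> pd j (pd i f) x"
  define A where "A = pd j (pd i f) x"
  define B where "B = pd i (pd j f) x"
  define e where "e = \<bar>A - B\<bar> / 2"
  have e: "e > 0" using ne by (simp add: e_def A_def B_def)
  obtain r where r: "r > 0" "ball x r \<subseteq> U" using U by (meson openE)
  have cA: "isCont (pd j (pd i f)) x" using smooth_isCont[OF sm U(1) U(2), of "[j,i]"] by simp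
  have cB: "isCont (pd i (pd j f)) x" using smooth_isCont[OF sm U(1) U(2), of "[i,j]"] by simp
  obtain d1 where d1: "d1 > 0" "\<forall>y. norm (y - x) < d1 \<longrightarrow> \<bar>pd j (pd i f) y - A\<bar> < e"
    using cA e unfolding continuous_at_eps_delta dist_norm real_norm_def A_def by blast
  obtain d2 where d2: "d2 > 0" "\<forall>y. norm (y - x) < d2 \<longrightarrow> \<bar>pd i (pd j f) y - B\<bar> < e"
    using cB e unfolding continuous_at_eps_delta dist_norm real_norm_def B_def by blast
  define s where "s = min (r/4) (min (d1/4) (d2/4))"
  have s: "0 < s" "2 * s < r" "2 * s < d1" "2 * s < d2" using r d1 d2 by (auto simp: s_def)
  obtain \<xi> \<eta> where xe: "0 < \<xi>" "\<xi> < s" "0 < \<eta>" "\<eta> < s"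
    and m1: "f (x + s *\<^sub>R axis i 1 + s *\<^sub>R axis j 1) - f (x + s *\<^sub>R axis i 1) - f (x + s *\<^sub>R axis j 1) + f x
      = s * s * pd j (pd i f) (x + \<xi> *\<^sub>R axis i 1 + \<eta> *\<^sub>R axis j 1)"
    using mixed_difference_mvt[OF r(2) sm s(1) s(2), of i j] by blast
  obtain \<xi>' \<eta>' where xe': "0 < \<xi>'" "\<xi>' < s" "0 < \<eta>'" "\<eta>' < s"
    and m2: "f (x + s *\<^sub>R axis j 1 + s *\<^sub>R axis i 1) - f (x + s *\<^sub>R axis j 1) - f (x + s *\<^sub>R axis i 1) + f x
      = s * s * pd i (pd j f) (x + \<xi>' *\<^sub>R axis j 1 + \<eta>' *\<^sub>R axis i 1)"
    using mixed_difference_mvt[OF r(2) sm s(1) s(2), of j i] by blast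
  have "s * s * pd j (pd i f) (x + \<xi> *\<^sub>R axis i 1 + \<eta> *\<^sub>R axis j 1)
      = s * s * pd i (pd j f) (x + \<xi>' *\<^sub>R axis j 1 + \<eta>' *\<^sub>R axis i 1)"
  proof -
    have pt: "x + s *\<^sub>R axis j 1 + s *\<^sub>R axis i 1 = x + s *\<^sub>R axis i 1 + s *\<^sub>R axis j 1" by (simp add: add_ac)
    show ?thesis using m1 m2 unfolding pt by linarith
  qed
  then have eq: "pd j (pd i f) (x + \<xi> *\<^sub>R axis i 1 + \<eta> *\<^sub>R axis j 1) = pd i (pd j f) (x + \<xi>' *\<^sub>R axis j 1 + \<eta>' *\<^sub>R axis i 1)"
    using s(1) by simp
  have "\<bar>pd j (pd i f) (x + \<xi> *\<^sub>R axis i 1 + \<eta> *\<^sub>R axis j 1) - A\<bar> < e"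
    using d1(2) norm_two_axes[OF xe, of x i j] s by force
  moreover have "\<bar>pd i (pd j f) (x + \<xi>' *\<^sub>R axis j 1 + \<eta>' *\<^sub>R axis i 1) - B\<bar> < e"
    using d2(2) norm_two_axes[OF xe', of x j i] s by force
  ultimately have "\<bar>A - B\<bar> < 2 * e" using eq by linarith
  then show False by (simp add: e_def)
qed


lemma open_line_preimage: "open U \<Longrightarrow> open {t::real. (y::pt) + t *\<^sub>R v \<in> U}"
proof -
  assume U: "open U"
  have "open ((\<lambda>t::real. y + t *\<^sub>R v) -` U)"
    by (rule continuous_open_vimage[OF U]) (intro continuous_add continuous_const continuous_scaleR continuous_ident)
  then show ?thesis by (simp add: vimage_def)
qed

lemma pd_local:
  assumes U: "open U" "x \<in> U" and eq: "\<forall>y\<in>U. f y = h y"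
  shows "pd i f x = pd i h x"
  unfolding pd_def
proof (rule deriv_cong_ev[OF _ refl])
  let ?S = "{t::real. x + t *\<^sub>R axis i 1 \<in> U}"
  have "open ?S" "0 \<in> ?S" using open_line_preimage[OF U(1)] U(2) by auto
  then show "\<forall>\<^sub>F t in nhds 0. f (x + t *\<^sub>R axis i 1) = h (x + t *\<^sub>R axis i 1)"
    unfolding eventually_nhds using eq by blast
qed

lemma differentiable_prod:
  fixes f :: "'i \<Rightarrow> real \<Rightarrow> real"
  assumes "finite A" "\<forall>a\<in>A. (f a) differentiable (at x)"
  shows "(\<lambda>t. \<Prod>a\<in>A. f a t) differentiable (at x)"
  using assms
proof (induction A rule: finite_induct)
  case empty then show ?case by simp
next
  case (insert a A)
  then show ?case by (simp add: prod.insert)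
qed

lemma det_differentiable:
  fixes F :: "real \<Rightarrow> real^'n^'n"
  assumes "\<forall>i j. (\<lambda>t. F t $ i $ j) differentiable (at x)"
  shows "(\<lambda>t. det (F t)) differentiable (at x)"
  unfolding det_def
  by (intro differentiable_sum finite_permutations ballI differentiable_mult differentiable_const
      differentiable_prod finite) (use assms in auto)


text \<open>The inverse metric is differentiable, being a quotient of determinants (Cramer's rule).\<close>
lemma ginv_axis_differentiable:
  assumes U: "open U" "x \<in> U" and sm: "\<forall>a b. smooth_on U (\<lambda>y. g y a b)"
    and L: "\<forall>y\<in>U. lorentzian_form (g y)"
  shows "axis_differentiable i (\<lambda>y. ginv g y a b) x"
proof -
  let ?l = "\<lambda>t::real. x + t *\<^sub>R axis i 1"
  define q where "q t = det (\<chi> i' j. if j = a then axis b 1 $ i' else gmat g (?l t) $ i' $ j) / det (gmat g (?l t))" for t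
  have ent: "(\<lambda>t. g (?l t) i' j) differentiable (at 0)" for i' j
    using smooth_axis_differentiable[OF sm[rule_format, of i' j] U(2), of i "[]"] unfolding axis_differentiable_def by simp
  have qd: "q differentiable (at 0)"
    unfolding q_def
  proof (intro differentiable_divide det_differentiable allI)
    fix i' j
    show "(\<lambda>t. (\<chi> i' j. if j = a then axis b 1 $ i' else gmat g (?l t) $ i' $ j) $ i' $ j) differentiable (at 0)"
      using ent by (cases "j = a") (simp_all add: gmat_def)
    show "(\<lambda>t. gmat g (?l t) $ i' $ j) differentiable (at 0)"
      using ent by (simp add: gmat_def)
  next
    show "det (gmat g (?l 0)) \<noteq> 0" using det_gmat_nonzero[where g=g and y=x, OF L[rule_format, OF U(2)]] by simp
  qed
  then obtain D where D: "(q has_real_derivative D) (at 0)" using real_differentiable_def by blast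
  let ?S = "{t::real. x + t *\<^sub>R axis i 1 \<in> U}"
  have "open ?S" "0 \<in> ?S" using open_line_preimage[OF U(1)] U(2) by auto
  then have "((\<lambda>t. ginv g (?l t) a b) has_real_derivative D) (at 0)"
    by (rule has_field_derivative_transform_within_open[OF D]) (use L ginv_cramer q_def in auto)
  then show ?thesis unfolding axis_differentiable_def using real_differentiable_def by blast
qed

text \<open>Differentiating g_{ae} g^{ef} = \<delta>_a^f: the derivative of the inverse metric.\<close>
lemma pd_metric_inverse_product:
  assumes U: "open U" "x \<in> U" and sm: "\<forall>a b. smooth_on U (\<lambda>y. g y a b)"
    and L: "\<forall>y\<in>U. lorentzian_form (g y)"
  shows "(\<Sum>e\<in>UNIV. pd i (\<lambda>y. g y a e) x * ginv g x e f + g x a e * pd i (\<lambda>y. ginv g y e f) x) = 0"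
proof -
  let ?l = "\<lambda>t::real. x + t *\<^sub>R axis i 1"
  have D1: "((\<lambda>t. \<Sum>e\<in>UNIV. g (?l t) a e * ginv g (?l t) e f) has_real_derivative
     (\<Sum>e\<in>UNIV. pd i (\<lambda>y. g y a e) x * ginv g x e f + g x a e * pd i (\<lambda>y. ginv g y e f) x)) (at 0)"
  proof (rule DERIV_sum)
    fix e :: 4
    have A: "((\<lambda>t. g (?l t) a e) has_real_derivative pd i (\<lambda>y. g y a e) x) (at 0)"
      using pd_has_derivative[OF smooth_axis_differentiable[OF sm[rule_format, of a e] U(2), of i "[]"]] by simp
    have B: "((\<lambda>t. ginv g (?l t) e f) has_real_derivative pd i (\<lambda>y. ginv g y e f) x) (at 0)"
      using pd_has_derivative[OF ginv_axis_differentiable[OF U sm L]] by simp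
    show "((\<lambda>t. g (?l t) a e * ginv g (?l t) e f) has_real_derivative
       pd i (\<lambda>y. g y a e) x * ginv g x e f + g x a e * pd i (\<lambda>y. ginv g y e f) x) (at 0)"
      using DERIV_mult[OF A B] by (simp add: ac_simps)
  qed
  let ?S = "{t::real. x + t *\<^sub>R axis i 1 \<in> U}"
  have "open ?S" "0 \<in> ?S" using open_line_preimage[OF U(1)] U(2) by auto
  then have D2: "((\<lambda>t. \<Sum>e\<in>UNIV. g (?l t) a e * ginv g (?l t) e f) has_real_derivative 0) (at 0)"
    by (rule has_field_derivative_transform_within_open[OF DERIV_const[of "if a = f then 1 else 0"]])
       (use L ginv_right_inverse in auto)
  show ?thesis using DERIV_unique[OF D1 D2] .
qed



section \<open>Antisymmetry of the Riemann tensor in its first index pair\<close>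

text \<open>They are stated
  for abstract arrays: G, H a metric and its inverse, dg, dH their first and DD the
  second derivatives, L the lowered Christoffel symbols and \<Gamma> = H L / 2.\<close>

lemma lower_christoffel:
  fixes G H :: "4 \<Rightarrow> 4 \<Rightarrow> real" and L \<Gamma> :: "4 \<Rightarrow> 4 \<Rightarrow> 4 \<Rightarrow> real"
  assumes GH: "\<forall>a c. (\<Sum>b\<in>UNIV. G a b * H b c) = (if a = c then 1 else 0)"
    and \<Gamma>_def: "\<And>a d b. \<Gamma> a d b = (1/2) * (\<Sum>e\<in>UNIV. H a e * L e d b)"
  shows "(\<Sum>e\<in>UNIV. G a e * \<Gamma> e c f) = (1/2) * L a c f"
proof -
  have "(\<Sum>e\<in>UNIV. G a e * \<Gamma> e c f) = (1/2) * (\<Sum>e\<in>UNIV. \<Sum>h\<in>UNIV. G a e * H e h * L h c f)"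
    unfolding \<Gamma>_def by (simp add: sum_distrib_left algebra_simps)
  also have "\<dots> = (1/2) * (\<Sum>h\<in>UNIV. (\<Sum>e\<in>UNIV. G a e * H e h) * L h c f)"
    by (simp only: sum.swap[of "\<lambda>e h. G a e * H e h * L h c f"] sum_distrib_right)
  also have "\<dots> = (1/2) * L a c f" using GH by (simp add: mult_if_zero_left sum.delta)
  finally show ?thesis .
qed

text \<open>Lowering the derivative of \<Gamma>: the derivative of H is traded for that of G by
  differentiating G H = 1 (hypothesis dGH).\<close>
lemma lower_christoffel_deriv:
  fixes G H :: "4 \<Rightarrow> 4 \<Rightarrow> real" and dH dg L \<Gamma> :: "4 \<Rightarrow> 4 \<Rightarrow> 4 \<Rightarrow> real"
    and dL d\<Gamma> :: "4 \<Rightarrow> 4 \<Rightarrow> 4 \<Rightarrow> 4 \<Rightarrow> real"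
  assumes GH: "\<forall>a c. (\<Sum>b\<in>UNIV. G a b * H b c) = (if a = c then 1 else 0)"
    and dGH: "\<forall>c a f. (\<Sum>e\<in>UNIV. dg c a e * H e f + G a e * dH c e f) = 0"
    and \<Gamma>_def: "\<And>a d b. \<Gamma> a d b = (1/2) * (\<Sum>e\<in>UNIV. H a e * L e d b)"
    and d\<Gamma>_def: "\<And>c a d b. d\<Gamma> c a d b = (1/2) * (\<Sum>e\<in>UNIV. dH c a e * L e d b + H a e * dL c e d b)"
  shows "(\<Sum>e\<in>UNIV. G a e * d\<Gamma> c e d b) = - (\<Sum>e\<in>UNIV. dg c a e * \<Gamma> e d b) + (1/2) * dL c a d b"
proof -
  have GdH: "(\<Sum>e\<in>UNIV. G a e * dH c e f) = - (\<Sum>e\<in>UNIV. dg c a e * H e f)" for f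
    using dGH[rule_format, of c a f] by (simp add: sum.distrib eq_neg_iff_add_eq_0 add.commute)
  have "(\<Sum>e\<in>UNIV. G a e * d\<Gamma> c e d b)
      = (1/2) * (\<Sum>e\<in>UNIV. \<Sum>f\<in>UNIV. G a e * dH c e f * L f d b)
        + (1/2) * (\<Sum>e\<in>UNIV. \<Sum>f\<in>UNIV. G a e * H e f * dL c f d b)"
    unfolding d\<Gamma>_def by (simp add: sum_distrib_left sum.distrib algebra_simps)
  also have "\<dots> = (1/2) * (\<Sum>f\<in>UNIV. (\<Sum>e\<in>UNIV. G a e * dH c e f) * L f d b)
        + (1/2) * (\<Sum>f\<in>UNIV. (\<Sum>e\<in>UNIV. G a e * H e f) * dL c f d b)"
    by (simp only: sum.swap[of "\<lambda>e f. G a e * dH c e f * L f d b"]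
        sum.swap[of "\<lambda>e f. G a e * H e f * dL c f d b"] sum_distrib_right)
  also have "\<dots> = (1/2) * (\<Sum>f\<in>UNIV. (- (\<Sum>e\<in>UNIV. dg c a e * H e f)) * L f d b) + (1/2) * dL c a d b"
    using GH by (simp add: GdH mult_if_zero_left sum.delta)
  also have "\<dots> = - (\<Sum>e\<in>UNIV. dg c a e * \<Gamma> e d b) + (1/2) * dL c a d b"
  proof -
    have "(\<Sum>f\<in>UNIV. (- (\<Sum>e\<in>UNIV. dg c a e * H e f)) * L f d b)
        = - (\<Sum>e\<in>UNIV. \<Sum>f\<in>UNIV. dg c a e * H e f * L f d b)"
      by (simp add: sum_distrib_right sum_negf sum.swap[of "\<lambda>e f. dg c a e * H e f * L f d b"])
    then show ?thesis unfolding \<Gamma>_def by (simp add: sum_distrib_left algebra_simps)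
  qed
  finally show ?thesis .
qed

lemma christoffel_exchange:
  fixes H :: "4 \<Rightarrow> 4 \<Rightarrow> real" and L \<Gamma> :: "4 \<Rightarrow> 4 \<Rightarrow> 4 \<Rightarrow> real"
  assumes Hsym: "\<forall>a b. H a b = H b a"
    and \<Gamma>_def: "\<And>a d b. \<Gamma> a d b = (1/2) * (\<Sum>e\<in>UNIV. H a e * L e d b)"
  shows "(\<Sum>e\<in>UNIV. L e p q * \<Gamma> e r s) = (\<Sum>e\<in>UNIV. L e r s * \<Gamma> e p q)"
proof -
  have "(\<Sum>e\<in>UNIV. L e p q * \<Gamma> e r s) = (1/2) * (\<Sum>e\<in>UNIV. \<Sum>h\<in>UNIV. L e p q * H e h * L h r s)"
    unfolding \<Gamma>_def by (simp add: sum_distrib_left algebra_simps)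
  also have "\<dots> = (1/2) * (\<Sum>h\<in>UNIV. \<Sum>e\<in>UNIV. L e p q * H e h * L h r s)"
    by (simp only: sum.swap[of "\<lambda>e h. L e p q * H e h * L h r s"])
  also have "\<dots> = (1/2) * (\<Sum>h\<in>UNIV. \<Sum>e\<in>UNIV. L h r s * H h e * L e p q)"
    by (intro arg_cong[where f="\<lambda>t. (1/2) * t"] sum.cong refl, subst Hsym[rule_format], simp add: ac_simps)
  also have "\<dots> = (\<Sum>e\<in>UNIV. L e r s * \<Gamma> e p q)"
    unfolding \<Gamma>_def by (simp add: sum_distrib_left algebra_simps)
  finally show ?thesis .
qed

lemma riemann_algebra:
  fixes G H :: "4 \<Rightarrow> 4 \<Rightarrow> real" and dH dg L \<Gamma> :: "4 \<Rightarrow> 4 \<Rightarrow> 4 \<Rightarrow> real"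
    and DD dL d\<Gamma> Ru R :: "4 \<Rightarrow> 4 \<Rightarrow> 4 \<Rightarrow> 4 \<Rightarrow> real"
  assumes GH: "\<forall>a c. (\<Sum>b\<in>UNIV. G a b * H b c) = (if a = c then 1 else 0)"
    and Hsym: "\<forall>a b. H a b = H b a"
    and dgsym: "\<forall>c a b. dg c a b = dg c b a"
    and DDsym: "\<forall>c d a b. DD c d a b = DD c d b a"
    and DDcomm: "\<forall>c d a b. DD c d a b = DD d c a b"
    and dGH: "\<forall>c a f. (\<Sum>e\<in>UNIV. dg c a e * H e f + G a e * dH c e f) = 0"
    and L_def: "\<And>e d b. L e d b = dg d e b + dg b e d - dg e d b"
    and dL_def: "\<And>c e d b. dL c e d b = DD c d e b + DD c b e d - DD c e d b"
    and \<Gamma>_def: "\<And>a d b. \<Gamma> a d b = (1/2) * (\<Sum>e\<in>UNIV. H a e * L e d b)"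
    and d\<Gamma>_def: "\<And>c a d b. d\<Gamma> c a d b = (1/2) * (\<Sum>e\<in>UNIV. dH c a e * L e d b + H a e * dL c e d b)"
    and Ru_def: "\<And>a b c d. Ru a b c d = d\<Gamma> c a d b - d\<Gamma> d a c b
        + (\<Sum>e\<in>UNIV. \<Gamma> a c e * \<Gamma> e d b - \<Gamma> a d e * \<Gamma> e c b)"
    and R_def: "\<And>a b c d. R a b c d = (\<Sum>e\<in>UNIV. G a e * Ru e b c d)"
  shows "R a b c d = - R b a c d"
proof -
  have GdG: "(\<Sum>e\<in>UNIV. G a e * d\<Gamma> c e d b) = - (\<Sum>e\<in>UNIV. dg c a e * \<Gamma> e d b) + (1/2) * dL c a d b"
    for a c d b by (rule lower_christoffel_deriv[OF GH dGH \<Gamma>_def d\<Gamma>_def])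
  have GG: "(\<Sum>e\<in>UNIV. G a e * \<Gamma> e c f) = (1/2) * L a c f" for a c f
    by (rule lower_christoffel[OF GH \<Gamma>_def])
  have Lsw: "(\<Sum>e\<in>UNIV. L e p q * \<Gamma> e r s) = (\<Sum>e\<in>UNIV. L e r s * \<Gamma> e p q)" for p q r s
    by (rule christoffel_exchange[OF Hsym \<Gamma>_def])
  have Gq: "(\<Sum>e\<in>UNIV. G a e * (\<Sum>f\<in>UNIV. \<Gamma> e c f * \<Gamma> f d b - \<Gamma> e d f * \<Gamma> f c b))
      = (1/2) * (\<Sum>f\<in>UNIV. L a c f * \<Gamma> f d b) - (1/2) * (\<Sum>f\<in>UNIV. L a d f * \<Gamma> f c b)" for a b c d
  proof -
    have "(\<Sum>e\<in>UNIV. G a e * (\<Sum>f\<in>UNIV. \<Gamma> e c f * \<Gamma> f d b - \<Gamma> e d f * \<Gamma> f c b))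
      = (\<Sum>e\<in>UNIV. \<Sum>f\<in>UNIV. G a e * \<Gamma> e c f * \<Gamma> f d b) - (\<Sum>e\<in>UNIV. \<Sum>f\<in>UNIV. G a e * \<Gamma> e d f * \<Gamma> f c b)"
      by (simp add: sum_distrib_left sum_subtractf algebra_simps)
    also have "\<dots> = (\<Sum>f\<in>UNIV. (\<Sum>e\<in>UNIV. G a e * \<Gamma> e c f) * \<Gamma> f d b)
        - (\<Sum>f\<in>UNIV. (\<Sum>e\<in>UNIV. G a e * \<Gamma> e d f) * \<Gamma> f c b)"
      by (simp only: sum.swap[of "\<lambda>e f. G a e * \<Gamma> e c f * \<Gamma> f d b"]
          sum.swap[of "\<lambda>e f. G a e * \<Gamma> e d f * \<Gamma> f c b"] sum_distrib_right)
    also have "\<dots> = (1/2) * (\<Sum>f\<in>UNIV. L a c f * \<Gamma> f d b) - (1/2) * (\<Sum>f\<in>UNIV. L a d f * \<Gamma> f c b)"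
      by (simp add: GG sum_distrib_left mult.assoc)
    finally show ?thesis .
  qed
  have Lrel: "dg c a e - (1/2) * L a c e = (1/2) * L e c a" for c a e
    unfolding L_def using dgsym[rule_format, of c a e] dgsym[rule_format, of a c e] dgsym[rule_format, of e c a]
    by (simp add: algebra_simps)
  have Rform: "R a b c d = (1/2) * (dL c a d b - dL d a c b) - (1/2) * (\<Sum>e\<in>UNIV. L e c a * \<Gamma> e d b)
      + (1/2) * (\<Sum>e\<in>UNIV. L e d a * \<Gamma> e c b)" for a b c d
  proof -
    have "R a b c d = (\<Sum>e\<in>UNIV. G a e * d\<Gamma> c e d b) - (\<Sum>e\<in>UNIV. G a e * d\<Gamma> d e c b)
       + (\<Sum>e\<in>UNIV. G a e * (\<Sum>f\<in>UNIV. \<Gamma> e c f * \<Gamma> f d b - \<Gamma> e d f * \<Gamma> f c b))"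
      unfolding R_def Ru_def by (simp add: sum_subtractf sum.distrib algebra_simps)
    also have "\<dots> = - (\<Sum>e\<in>UNIV. (dg c a e - (1/2) * L a c e) * \<Gamma> e d b)
        + (\<Sum>e\<in>UNIV. (dg d a e - (1/2) * L a d e) * \<Gamma> e c b) + (1/2) * (dL c a d b - dL d a c b)"
      unfolding GdG Gq by (simp add: sum_subtractf left_diff_distrib sum_distrib_left algebra_simps)
    also have "\<dots> = (1/2) * (dL c a d b - dL d a c b) - (1/2) * (\<Sum>e\<in>UNIV. L e c a * \<Gamma> e d b)
      + (1/2) * (\<Sum>e\<in>UNIV. L e d a * \<Gamma> e c b)"
      unfolding Lrel by (simp add: sum_distrib_left mult.assoc)
    finally show ?thesis .
  qed
  have dLs: "dL c a d b + dL c b d a = 2 * DD c d a b" for c a d b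
    unfolding dL_def using DDsym[rule_format, of c d b a] DDsym[rule_format, of c b a d] DDsym[rule_format, of c a b d]
    by (simp add: algebra_simps)
  show ?thesis
    unfolding Rform using dLs[of c a d b] dLs[of d a c b] DDcomm[rule_format, of c d a b]
      Lsw[of c a d b] Lsw[of d a c b] by (simp add: algebra_simps)
qed

lemma DERIV_mult_swapped:
  "(f has_field_derivative D) (at x within s) \<Longrightarrow> (g has_field_derivative E) (at x within s) \<Longrightarrow>
    ((\<lambda>x. f x * g x) has_field_derivative D * g x + f x * E) (at x within s)"
  using DERIV_mult'[of f D x s g E] by (simp add: add.commute)

lemma pd_christoffel:
  assumes U: "open U" "x \<in> U" and sm: "\<forall>a b. smooth_on U (\<lambda>y. g y a b)"
    and L: "\<forall>y\<in>U. lorentzian_form (g y)"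
  shows "pd c (\<lambda>y. christoffel g y a d b) x = (1/2) * (\<Sum>e\<in>UNIV.
     pd c (\<lambda>y. ginv g y a e) x * (pd d (\<lambda>y. g y e b) x + pd b (\<lambda>y. g y e d) x - pd e (\<lambda>y. g y d b) x)
     + ginv g x a e * (pd c (pd d (\<lambda>y. g y e b)) x + pd c (pd b (\<lambda>y. g y e d)) x - pd c (pd e (\<lambda>y. g y d b)) x))"
proof -
  let ?l = "\<lambda>t::real. x + t *\<^sub>R axis c 1"
  have Hd: "((\<lambda>t. ginv g (?l t) a' e) has_real_derivative pd c (\<lambda>y. ginv g y a' e) x) (at 0)" for a' e
    using pd_has_derivative[OF ginv_axis_differentiable[OF U sm L]] by simp
  have Pd: "((\<lambda>t. pd d' (\<lambda>y. g y e b') (?l t)) has_real_derivative pd c (pd d' (\<lambda>y. g y e b')) x) (at 0)" for d' e b'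
    using pd_has_derivative[OF smooth_axis_differentiable[OF sm[rule_format, of e b'] U(2), of c "[d']"]] by simp
  have "((\<lambda>t. christoffel g (?l t) a d b) has_real_derivative (1/2) * (\<Sum>e\<in>UNIV.
     pd c (\<lambda>y. ginv g y a e) x * (pd d (\<lambda>y. g y e b) (?l 0) + pd b (\<lambda>y. g y e d) (?l 0) - pd e (\<lambda>y. g y d b) (?l 0))
     + ginv g (?l 0) a e * (pd c (pd d (\<lambda>y. g y e b)) x + pd c (pd b (\<lambda>y. g y e d)) x - pd c (pd e (\<lambda>y. g y d b)) x))) (at 0)"
    unfolding christoffel_def
    by (intro DERIV_cmult DERIV_sum DERIV_mult_swapped[OF Hd] DERIV_diff DERIV_add Pd)
  then show ?thesis using pd_eqI by simp
qed

text \<open>R_{abcd} = - R_{bacd} for the chart metric: instantiate riemann_algebra with the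
  derivatives of g, using symmetry of g, Schwarz's theorem and the derivative of g g^{-1} = 1.\<close>
lemma riemann_anti_first:
  assumes U: "open U" "x \<in> U" and sm: "\<forall>a b. smooth_on U (\<lambda>y. g y a b)"
    and L: "\<forall>y\<in>U. lorentzian_form (g y)"
  shows "riemann g x a b c d = - riemann g x b a c d"
proof -
  have Lx: "lorentzian_form (g x)" using L U by blast
  have GH: "\<forall>a c. (\<Sum>b\<in>UNIV. g x a b * ginv g x b c) = (if a = c then 1 else 0)"
    using ginv_right_inverse[where g=g and y=x, OF Lx] by blast
  have Hsym: "\<forall>a b. ginv g x a b = ginv g x b a"
    using ginv_sym[where g=g and y=x, OF Lx] by blast
  have gsymU: "\<forall>y\<in>U. g y a' b' = g y b' a'" for a' b'
    using L lorentzian_form_sym by blast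
  have dgsym: "\<forall>c a b. pd c (\<lambda>y. g y a b) x = pd c (\<lambda>y. g y b a) x"
    by (intro allI, rule pd_local[OF U], use gsymU in simp)
  have DDsym: "\<forall>c d a b. pd c (pd d (\<lambda>y. g y a b)) x = pd c (pd d (\<lambda>y. g y b a)) x"
  proof (intro allI)
    fix c d a b
    have "\<forall>y\<in>U. pd d (\<lambda>y. g y a b) y = pd d (\<lambda>y. g y b a) y"
      by (intro ballI, rule pd_local[OF U(1)], assumption, use gsymU in simp)
    then show "pd c (pd d (\<lambda>y. g y a b)) x = pd c (pd d (\<lambda>y. g y b a)) x"
      by (rule pd_local[OF U])
  qed
  have DDcomm: "\<forall>c d a b. pd c (pd d (\<lambda>y. g y a b)) x = pd d (pd c (\<lambda>y. g y a b)) x"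
    by (intro allI, rule pd_commute[OF U], use sm in simp)
  have dGH: "\<forall>c a f. (\<Sum>e\<in>UNIV. pd c (\<lambda>y. g y a e) x * ginv g x e f + g x a e * pd c (\<lambda>y. ginv g y e f) x) = 0"
    using pd_metric_inverse_product[OF U sm L] by blast
  show ?thesis
  proof (rule riemann_algebra[where G="g x" and H="ginv g x" and dH="\<lambda>c a b. pd c (\<lambda>y. ginv g y a b) x"
      and dg="\<lambda>c a b. pd c (\<lambda>y. g y a b) x" and DD="\<lambda>c d a b. pd c (pd d (\<lambda>y. g y a b)) x"
      and L="\<lambda>e d b. pd d (\<lambda>y. g y e b) x + pd b (\<lambda>y. g y e d) x - pd e (\<lambda>y. g y d b) x"
      and dL="\<lambda>c e d b. pd c (pd d (\<lambda>y. g y e b)) x + pd c (pd b (\<lambda>y. g y e d)) x - pd c (pd e (\<lambda>y. g y d b)) x"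
      and \<Gamma>="christoffel g x" and d\<Gamma>="\<lambda>c a d b. pd c (\<lambda>y. christoffel g y a d b) x"
      and Ru="riemann_up g x" and R="riemann g x", OF GH Hsym dgsym DDsym DDcomm dGH])
    show "christoffel g x a d b = (1/2) * (\<Sum>e\<in>UNIV. ginv g x a e *
        (pd d (\<lambda>y. g y e b) x + pd b (\<lambda>y. g y e d) x - pd e (\<lambda>y. g y d b) x))" for a d b
      unfolding christoffel_def ..
    show "pd c (\<lambda>y. christoffel g y a d b) x = (1/2) * (\<Sum>e\<in>UNIV.
        pd c (\<lambda>y. ginv g y a e) x * (pd d (\<lambda>y. g y e b) x + pd b (\<lambda>y. g y e d) x - pd e (\<lambda>y. g y d b) x)
        + ginv g x a e * (pd c (pd d (\<lambda>y. g y e b)) x + pd c (pd b (\<lambda>y. g y e d)) x - pd c (pd e (\<lambda>y. g y d b)) x))"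
      for c a d b
      by (rule pd_christoffel[OF U sm L])
    show "riemann_up g x a b c d = pd c (\<lambda>y. christoffel g y a d b) x - pd d (\<lambda>y. christoffel g y a c b) x
        + (\<Sum>e\<in>UNIV. christoffel g x a c e * christoffel g x e d b - christoffel g x a d e * christoffel g x e c b)"
      for a b c d
      unfolding riemann_up_def ..
    show "riemann g x a b c d = (\<Sum>e\<in>UNIV. g x a e * riemann_up g x e b c d)" for a b c d
      unfolding riemann_def ..
  qed simp_all
qed


theorem simon_norm_nonneg_at:
  assumes L: "lorentzian_form (g x)"
    and kill: "\<forall>a b. Fkill g \<zeta> x a b + Fkill g \<zeta> x b a = 0"
    and riem: "\<forall>a b c d. riemann g x a b c d = - riemann g x b a c d"
    and lneg: "lam g \<zeta> x < 0"
  shows "simon_sq g \<zeta> x \<in> \<real> \<and> Re (simon_sq g \<zeta> x) \<ge> 0 \<and>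
         (simon_sq g \<zeta> x = 0 \<longleftrightarrow> (\<forall>a b c. simon g \<zeta> x a b c = 0))"
proof -
  obtain \<mu> :: "4 \<Rightarrow> real" and w :: "4 \<Rightarrow> 4 \<Rightarrow> real" where mupos: "\<forall>m. \<mu> m > 0"
    and K: "\<forall>a d. ginv g x a d = (\<Sum>m\<in>UNIV. \<mu> m * w m a * w m d) + (1 / lam g \<zeta> x) * \<zeta> x a * \<zeta> x d"
    using ginv_timelike_split[OF L lneg] by blast
  have GK: "\<forall>a c. (\<Sum>b\<in>UNIV. g x a b * ginv g x b c) = (if a = c then 1 else 0)"
    using ginv_right_inverse[where g=g and y=x, OF L] by blast
  have gsym: "\<forall>a b. g x a b = g x b a"
    using lorentzian_form_sym[OF L] by blast
  note orth = simon_orthogonal[OF gsym kill riem]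
  show ?thesis
    using norm3_nonneg[OF K GK mupos orth(1) orth(2) orth(3)] unfolding simon_sq_def .
qed

theorem mainTheorem12:
  fixes U :: "(real^4) set"
    and g :: "real^4 \<Rightarrow> 4 \<Rightarrow> 4 \<Rightarrow> real"
    and \<zeta> :: "real^4 \<Rightarrow> 4 \<Rightarrow> real"
    and x :: "real^4"
  assumes "open U"
    and "\<forall>a b. smooth_on U (\<lambda>y. g y a b)"
    and "\<forall>y\<in>U. lorentzian_form (g y)"
    and "killing_vector U g \<zeta>"
    and "x \<in> U"
    and "lam g \<zeta> x < 0"
  shows "simon_sq g \<zeta> x \<in> \<real> \<and> Re (simon_sq g \<zeta> x) \<ge> 0 \<and>
         (simon_sq g \<zeta> x = 0 \<longleftrightarrow> (\<forall>a b c. simon g \<zeta> x a b c = 0))"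
proof -
  have "lorentzian_form (g x)" using assms(3,5) by blast
  moreover have "\<forall>a b. Fkill g \<zeta> x a b + Fkill g \<zeta> x b a = 0"
    using assms(4,5) unfolding killing_vector_def by blast
  moreover have "\<forall>a b c d. riemann g x a b c d = - riemann g x b a c d"
    using riemann_anti_first[OF assms(1,5,2,3)] by blast
  ultimately show ?thesis using simon_norm_nonneg_at assms(6) by blast
qed

end
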